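(* Let $G$ be a finite group with irreducible complex characters $\psi_1,\dots,\psi_k$ of dimensions $n_i=\psi_i(1)$. Consider the problem of minimizing, over $(\alpha_1,\dots,\alpha_k)\in\mathbb{R}^k$, the quantity $$\Big\|\sum_{i=1}^k\frac{\alpha_i}{n_i^2}\mathrm{Re}(\psi_i)\Big\|_1$$ subject to the constraints $\sum_{i=1}^k\alpha_in_i=|G|$, $\alpha_i\ge0$ for $i=1,\dots,k$, and $\sum_{i=1}^k\alpha_i\mathrm{Re}(\psi_i(g))\ge0$ for all $g\in G$. Then $(\alpha_1,\dots,\alpha_k)=(n_1,\dots,n_k)$, i.e. the regular character $n_1\psi_1+\cdots+n_k\psi_k$, is a solution of this constrained minimization problem.
   Context: For a complex-valued function $f$ on $G$, its $L_1$ norm is $\|f\|_1=\sum_{g\in G}|\mathrm{Re}(f(g))|$. *)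

theory Defs
  imports "HOL-Algebra.Group" "Jordan_Normal_Form.Matrix"
begin

definition is_rep :: "('a, 'b) monoid_scheme \<Rightarrow> nat \<Rightarrow> ('a \<Rightarrow> complex mat) \<Rightarrow> bool" where
  "is_rep G d \<rho> \<longleftrightarrow>
     (\<forall>g \<in> carrier G. \<rho> g \<in> carrier_mat d d) \<and>
     \<rho> \<one>\<^bsub>G\<^esub> = 1\<^sub>m d \<and>
     (\<forall>g \<in> carrier G. \<forall>h \<in> carrier G. \<rho> (g \<otimes>\<^bsub>G\<^esub> h) = \<rho> g * \<rho> h)"

definition is_subspace :: "nat \<Rightarrow> complex vec set \<Rightarrow> bool" where
  "is_subspace d W \<longleftrightarrow> W \<subseteq> carrier_vec d \<and> 0\<^sub>v d \<in> W \<and>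
     (\<forall>v\<in>W. \<forall>w\<in>W. v + w \<in> W) \<and> (\<forall>c. \<forall>v\<in>W. c \<cdot>\<^sub>v v \<in> W)"

definition is_irred_rep :: "('a, 'b) monoid_scheme \<Rightarrow> nat \<Rightarrow> ('a \<Rightarrow> complex mat) \<Rightarrow> bool" where
  "is_irred_rep G d \<rho> \<longleftrightarrow> is_rep G d \<rho> \<and> d > 0 \<and>
     (\<forall>W. is_subspace d W \<and> (\<forall>g\<in>carrier G. \<forall>w\<in>W. \<rho> g *\<^sub>v w \<in> W)
          \<longrightarrow> W = {0\<^sub>v d} \<or> W = carrier_vec d)"

definition mat_trace :: "complex mat \<Rightarrow> complex" where
  "mat_trace A = (\<Sum>i<dim_row A. A $$ (i,i))"

text \<open>Character of a representation (set to 0 outside the carrier, for uniqueness).\<close>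
definition character :: "('a, 'b) monoid_scheme \<Rightarrow> ('a \<Rightarrow> complex mat) \<Rightarrow> 'a \<Rightarrow> complex" where
  "character G \<rho> = (\<lambda>g. if g \<in> carrier G then mat_trace (\<rho> g) else 0)"

definition irr_chars :: "('a, 'b) monoid_scheme \<Rightarrow> ('a \<Rightarrow> complex) set" where
  "irr_chars G = {\<chi>. \<exists>d \<rho>. is_irred_rep G d \<rho> \<and> \<chi> = character G \<rho>}"

definition L1_norm :: "('a, 'b) monoid_scheme \<Rightarrow> ('a \<Rightarrow> complex) \<Rightarrow> real" where
  "L1_norm G f = (\<Sum>g\<in>carrier G. \<bar>Re (f g)\<bar>)"

definition chdeg :: "('a, 'b) monoid_scheme \<Rightarrow> ('a \<Rightarrow> complex) \<Rightarrow> real" where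
  "chdeg G \<psi> = Re (\<psi> \<one>\<^bsub>G\<^esub>)"

definition objective :: "('a, 'b) monoid_scheme \<Rightarrow> (('a \<Rightarrow> complex) \<Rightarrow> real) \<Rightarrow> real" where
  "objective G \<alpha> = L1_norm G (\<lambda>g. complex_of_real
      (\<Sum>\<psi>\<in>irr_chars G. \<alpha> \<psi> / (chdeg G \<psi>)^2 * Re (\<psi> g)))"

definition feasible :: "('a, 'b) monoid_scheme \<Rightarrow> (('a \<Rightarrow> complex) \<Rightarrow> real) \<Rightarrow> bool" where
  "feasible G \<alpha> \<longleftrightarrow>
     (\<Sum>\<psi>\<in>irr_chars G. \<alpha> \<psi> * chdeg G \<psi>) = real (card (carrier G)) \<and>
     (\<forall>\<psi>\<in>irr_chars G. \<alpha> \<psi> \<ge> 0) \<and>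
     (\<forall>g\<in>carrier G. (\<Sum>\<psi>\<in>irr_chars G. \<alpha> \<psi> * Re (\<psi> g)) \<ge> 0)"

end

theory Submission
  imports Defs "Jordan_Normal_Form.Spectral_Radius"
begin

text \<open>
  For \<open>\<alpha> = (n\<^sub>\<psi>)\<close> the function inside the norm is \<open>g \<mapsto> Re (\<Sum>\<psi>. \<psi>(g) / \<psi>(1))\<close>,
  and by Frobenius' formula \<open>|G| \<Sum>\<psi>. \<psi>(g) / \<psi>(1)\<close> is the number of pairs \<open>(x, y)\<close>
  with \<open>[x, y] = g\<^sup>-\<^sup>1\<close>. It is therefore nonnegative, so the objective is its sum over \<open>G\<close>,
  which by orthogonality against the trivial character is \<open>|G|\<close>.
  For an arbitrary feasible \<open>\<alpha>\<close>, the nonnegative function \<open>\<Sum>\<psi>. \<alpha>\<^sub>\<psi> Re \<psi>\<close> takes the value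
  \<open>\<Sum>\<psi>. \<alpha>\<^sub>\<psi> n\<^sub>\<psi> = |G|\<close> at \<open>1\<close>, so its sum over \<open>G\<close>, which is \<open>|G|\<close> times the coefficient
  \<open>\<alpha>\<^sub>1\<close> of the trivial character, is at least \<open>|G|\<close>; the same computation shows that the sum
  over \<open>G\<close> of the function inside the norm is also \<open>|G| \<alpha>\<^sub>1\<close>.
\<close>

section \<open>Matrices and traces\<close>

lemma mult_mat_vec_nth:
  "A \<in> carrier_mat n m \<Longrightarrow> v \<in> carrier_vec m \<Longrightarrow> i < n \<Longrightarrow>
   (A *\<^sub>v v) $ i = (\<Sum>k<m. A $$ (i,k) * v $ k)"
  by (simp add: mult_mat_vec_def scalar_prod_def atLeast0LessThan)

lemma mult_mat_nth:
  "A \<in> carrier_mat n m \<Longrightarrow> B \<in> carrier_mat m p \<Longrightarrow> i < n \<Longrightarrow> j < p \<Longrightarrow>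
   (A * B) $$ (i,j) = (\<Sum>k<m. A $$ (i,k) * B $$ (k,j))"
  by (simp add: scalar_prod_def atLeast0LessThan)

lemma mult_mat_vec_zero: "(A :: complex mat) \<in> carrier_mat n m \<Longrightarrow> A *\<^sub>v 0\<^sub>v m = 0\<^sub>v n"
  by (rule eq_vecI) (auto simp: mult_mat_vec_nth simp del: index_mult_mat_vec)

lemma smult_mat_mult_vec:
  "(A :: complex mat) \<in> carrier_mat n m \<Longrightarrow> v \<in> carrier_vec m \<Longrightarrow> (a \<cdot>\<^sub>m A) *\<^sub>v v = a \<cdot>\<^sub>v (A *\<^sub>v v)"
  by (rule eq_vecI) (auto simp: mult_mat_vec_nth[of _ n m] sum_distrib_left ac_simps
      simp del: index_mult_mat_vec)

lemma mat_eq_zeroI: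
  assumes A: "(A :: complex mat) \<in> carrier_mat e d"
    and zero: "\<And>v. v \<in> carrier_vec d \<Longrightarrow> A *\<^sub>v v = 0\<^sub>v e"
  shows "A = 0\<^sub>m e d"
proof (rule eq_matI)
  fix i j assume ij: "i < dim_row (0\<^sub>m e d :: complex mat)" "j < dim_col (0\<^sub>m e d :: complex mat)"
  have "A $$ (i,j) = (A *\<^sub>v unit_vec d j) $ i" using A ij by simp
  also have "\<dots> = 0" using zero[of "unit_vec d j"] ij by simp
  finally show "A $$ (i,j) = 0\<^sub>m e d $$ (i,j)" using ij by simp
qed (use A in auto)

lemma sum_lessThan_split:
  assumes "m \<le> (d :: nat)"
  shows "(\<Sum>k<d. f k) = (\<Sum>k<m. f k) + (\<Sum>k<d - m. f (k + m) :: 'x :: comm_monoid_add)"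
proof -
  have "(\<Sum>k<m + r. f k) = (\<Sum>k<m. f k) + (\<Sum>k<r. f (k + m))" for r
    by (induction r) (auto simp: add_ac)
  from this[of "d - m"] show ?thesis using assms by simp
qed

lemma sum_lessThan_if_less:
  assumes "L \<le> (n :: nat)"
  shows "(\<Sum>k<n. if k < L then f k else 0) = (\<Sum>k<L. f k :: 'x :: comm_monoid_add)"
proof -
  have "{..<n} \<inter> {k. k < L} = {..<L}" using assms by auto
  then show ?thesis by (simp add: sum.If_cases)
qed

lemma mat_trace_carrier: "A \<in> carrier_mat n n \<Longrightarrow> mat_trace A = (\<Sum>i<n. A $$ (i,i))"
  by (simp add: mat_trace_def)

lemma mat_trace_mult:
  "A \<in> carrier_mat n m \<Longrightarrow> B \<in> carrier_mat m n \<Longrightarrow>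
   mat_trace (A * B) = (\<Sum>i<n. \<Sum>k<m. A $$ (i,k) * B $$ (k,i))"
  by (simp add: mat_trace_def scalar_prod_def atLeast0LessThan)

lemma mat_trace_mult_comm:
  assumes A: "A \<in> carrier_mat n m" and B: "B \<in> carrier_mat m n"
  shows "mat_trace (A * B) = mat_trace (B * A)"
proof -
  have "mat_trace (A * B) = (\<Sum>k<m. \<Sum>i<n. B $$ (k,i) * A $$ (i,k))"
    using A B by (simp add: mat_trace_mult sum.swap[of _ "{..<n}"] mult.commute)
  also have "\<dots> = mat_trace (B * A)"
    using A B by (simp add: mat_trace_mult)
  finally show ?thesis .
qed

lemma mat_trace_conj:
  assumes A: "(A :: complex mat) \<in> carrier_mat n n" and S: "S \<in> carrier_mat n n"
    and T: "T \<in> carrier_mat n n" and TS: "T * S = 1\<^sub>m n"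
  shows "mat_trace (T * A * S) = mat_trace A"
proof -
  have "mat_trace (T * A * S) = mat_trace (S * (T * A))"
    by (rule mat_trace_mult_comm[of _ n n]) (use A S T in auto)
  also have "S * (T * A) = (S * T) * A" using A S T by (simp add: assoc_mult_mat)
  also have "S * T = 1\<^sub>m n" using TS S T by (metis mat_mult_left_right_inverse)
  finally show ?thesis using A by simp
qed

lemma mat_trace_smult: "M \<in> carrier_mat n n \<Longrightarrow> mat_trace (c \<cdot>\<^sub>m M) = c * mat_trace M"
  by (simp add: mat_trace_def sum_distrib_left)

lemma mat_trace_smult_one: "mat_trace (a \<cdot>\<^sub>m 1\<^sub>m d) = a * of_nat d"
  by (simp add: mat_trace_def)

lemma mat_trace_smult_one_mult: "M \<in> carrier_mat d d \<Longrightarrow> mat_trace ((c \<cdot>\<^sub>m 1\<^sub>m d) * M) = c * mat_trace M"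
  by (simp add: mult_smult_assoc_mat[of "1\<^sub>m d" d d M d] mat_trace_smult)

definition mat_sum :: "nat \<Rightarrow> nat \<Rightarrow> ('x \<Rightarrow> complex mat) \<Rightarrow> 'x set \<Rightarrow> complex mat" where
  "mat_sum n m F A = mat n m (\<lambda>(i,j). \<Sum>a\<in>A. F a $$ (i,j))"

lemma mat_sum_carrier [simp]: "mat_sum n m F A \<in> carrier_mat n m"
  by (simp add: mat_sum_def)

lemma mult_mat_sum:
  assumes M: "M \<in> carrier_mat k n" and F: "\<And>a. a \<in> A \<Longrightarrow> F a \<in> carrier_mat n m"
  shows "M * mat_sum n m F A = mat_sum k m (\<lambda>a. M * F a) A"
proof (rule eq_matI)
  fix i j assume "i < dim_row (mat_sum k m (\<lambda>a. M * F a) A)" "j < dim_col (mat_sum k m (\<lambda>a. M * F a) A)"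
  hence ij: "i < k" "j < m" by (auto simp: mat_sum_def)
  have "(M * mat_sum n m F A) $$ (i,j) = (\<Sum>l<n. \<Sum>a\<in>A. M $$ (i,l) * F a $$ (l,j))"
    using M ij by (subst mult_mat_nth[OF M mat_sum_carrier]) (auto simp: mat_sum_def sum_distrib_left)
  also have "\<dots> = (\<Sum>a\<in>A. (M * F a) $$ (i,j))"
    using M F ij by (subst sum.swap) (simp add: mult_mat_nth[of _ k n _ m])
  finally show "(M * mat_sum n m F A) $$ (i,j) = mat_sum k m (\<lambda>a. M * F a) A $$ (i,j)"
    using ij by (simp add: mat_sum_def)
qed (use M in \<open>auto simp: mat_sum_def\<close>)

lemma mat_sum_mult:
  assumes M: "M \<in> carrier_mat m k" and F: "\<And>a. a \<in> A \<Longrightarrow> F a \<in> carrier_mat n m"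
  shows "mat_sum n m F A * M = mat_sum n k (\<lambda>a. F a * M) A"
proof (rule eq_matI)
  fix i j assume "i < dim_row (mat_sum n k (\<lambda>a. F a * M) A)" "j < dim_col (mat_sum n k (\<lambda>a. F a * M) A)"
  hence ij: "i < n" "j < k" by (auto simp: mat_sum_def)
  have "(mat_sum n m F A * M) $$ (i,j) = (\<Sum>l<m. \<Sum>a\<in>A. F a $$ (i,l) * M $$ (l,j))"
    using M ij by (subst mult_mat_nth[OF mat_sum_carrier M]) (auto simp: mat_sum_def sum_distrib_right)
  also have "\<dots> = (\<Sum>a\<in>A. (F a * M) $$ (i,j))"
    using M F ij by (subst sum.swap) (simp add: mult_mat_nth[of _ n m _ k])
  finally show "(mat_sum n m F A * M) $$ (i,j) = mat_sum n k (\<lambda>a. F a * M) A $$ (i,j)"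
    using ij by (simp add: mat_sum_def)
qed (use M in \<open>auto simp: mat_sum_def\<close>)

lemma mat_trace_mat_sum:
  assumes "\<And>a. a \<in> A \<Longrightarrow> F a \<in> carrier_mat n n"
  shows "mat_trace (mat_sum n n F A) = (\<Sum>a\<in>A. mat_trace (F a))"
proof -
  have "mat_trace (mat_sum n n F A) = (\<Sum>i<n. \<Sum>a\<in>A. F a $$ (i,i))"
    by (simp add: mat_trace_def mat_sum_def)
  also have "\<dots> = (\<Sum>a\<in>A. \<Sum>i<n. F a $$ (i,i))" by (rule sum.swap)
  finally show ?thesis
    using assms unfolding carrier_mat_def by (auto simp: mat_trace_def intro!: sum.cong)
qed

definition mat_unit :: "nat \<Rightarrow> nat \<Rightarrow> nat \<Rightarrow> nat \<Rightarrow> complex mat" where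
  "mat_unit e d i l = mat e d (\<lambda>(a,b). if a = i \<and> b = l then 1 else 0)"

lemma mat_unit_carrier [simp]: "mat_unit e d i l \<in> carrier_mat e d"
  by (simp add: mat_unit_def)

lemma mat_trace_mat_unit: "i < d \<Longrightarrow> l < d \<Longrightarrow> mat_trace (mat_unit d d i l) = (if i = l then 1 else 0)"
  by (auto simp: mat_trace_def mat_unit_def sum.delta)

lemma mult_mat_unit_mult_nth:
  assumes X: "X \<in> carrier_mat n e" and Y: "Y \<in> carrier_mat d p" and i: "i < e" and l: "l < d"
    and a: "a < n" and b: "b < p"
  shows "(X * mat_unit e d i l * Y) $$ (a,b) = X $$ (a,i) * Y $$ (l,b)"
proof -
  have XE: "(X * mat_unit e d i l) $$ (a,c) = (if c = l then X $$ (a,i) else 0)" if c: "c < d" for c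
  proof -
    have "(X * mat_unit e d i l) $$ (a,c) = (\<Sum>k<e. X $$ (a,k) * mat_unit e d i l $$ (k,c))"
      using X a c by (intro mult_mat_nth) auto
    also have "\<dots> = (\<Sum>k<e. if k = i then (if c = l then X $$ (a,i) else 0) else 0)"
      using c by (intro sum.cong) (auto simp: mat_unit_def)
    also have "\<dots> = (if c = l then X $$ (a,i) else 0)" using i by (simp add: sum.delta)
    finally show ?thesis .
  qed
  have "(X * mat_unit e d i l * Y) $$ (a,b) = (\<Sum>c<d. (X * mat_unit e d i l) $$ (a,c) * Y $$ (c,b))"
    using X Y a b by (intro mult_mat_nth[of _ n d _ p]) auto
  also have "\<dots> = (\<Sum>c<d. if c = l then X $$ (a,i) * Y $$ (c,b) else 0)"
    using XE by (intro sum.cong) auto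
  also have "\<dots> = X $$ (a,i) * Y $$ (l,b)" using l by (simp add: sum.delta)
  finally show ?thesis .
qed

lemma det_nonzero_imp_inverse_mat:
  assumes A: "(A :: complex mat) \<in> carrier_mat n n" and "det A \<noteq> 0"
  obtains B where "B \<in> carrier_mat n n" "A * B = 1\<^sub>m n" "B * A = 1\<^sub>m n"
  using det_non_zero_imp_unit[OF assms, of undefined] that
  by (auto simp: Units_def ring_mat_def)

lemma det_nonzero_if_injective:
  assumes A: "(A :: complex mat) \<in> carrier_mat n n"
    and inj: "\<And>v. v \<in> carrier_vec n \<Longrightarrow> A *\<^sub>v v = 0\<^sub>v n \<Longrightarrow> v = 0\<^sub>v n"
  shows "det A \<noteq> 0"
  using det_0_iff_vec_prod_zero[OF A] inj by auto

lemma det_zero_colI: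
  assumes A: "(A :: complex mat) \<in> carrier_mat k k" and j: "j < k"
    and zero: "\<And>i. i < k \<Longrightarrow> A $$ (i,j) = 0"
  shows "det A = 0"
proof -
  have "A *\<^sub>v unit_vec k j = 0\<^sub>v k"
    using A j zero by (intro eq_vecI) (auto simp: mult_mat_vec_def)
  moreover have "unit_vec k j \<noteq> (0\<^sub>v k :: complex vec)"
    using j by (metis index_unit_vec(1) index_zero_vec(1) zero_neq_one)
  ultimately show ?thesis using det_0_iff_vec_prod_zero[OF A] unit_vec_carrier by blast
qed

text \<open>If \<open>d > e\<close>, padding \<open>A\<close> with zero rows gives a singular square matrix with the kernel of \<open>A\<close>.\<close>

lemma injective_mat_dim_le:
  assumes A: "(A :: complex mat) \<in> carrier_mat e d"
    and inj: "\<And>v. v \<in> carrier_vec d \<Longrightarrow> A *\<^sub>v v = 0\<^sub>v e \<Longrightarrow> v = 0\<^sub>v d"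
  shows "d \<le> e"
proof (rule ccontr)
  assume "\<not> d \<le> e"
  hence ed: "e < d" by simp
  define A' where "A' = mat d d (\<lambda>(i,j). if i < e then A $$ (i,j) else 0)"
  have A'c: "A' \<in> carrier_mat d d" by (simp add: A'_def)
  have "det (transpose_mat A') = 0"
    by (rule det_zero_colI[of _ d "d - 1"]) (use ed in \<open>auto simp: A'_def\<close>)
  hence "det A' = 0" using det_transpose[OF A'c] by simp
  then obtain v where v: "v \<in> carrier_vec d" "v \<noteq> 0\<^sub>v d" "A' *\<^sub>v v = 0\<^sub>v d"
    using det_0_iff_vec_prod_zero[OF A'c] by auto
  have "A *\<^sub>v v = 0\<^sub>v e"
  proof (rule eq_vecI)
    fix i assume i: "i < dim_vec (0\<^sub>v e :: complex vec)"
    have "(A *\<^sub>v v) $ i = (\<Sum>k<d. A $$ (i,k) * v $ k)"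
      by (rule mult_mat_vec_nth[OF A v(1)]) (use i in simp)
    also have "\<dots> = (A' *\<^sub>v v) $ i"
      by (subst mult_mat_vec_nth[OF A'c v(1)]) (use i ed in \<open>auto simp: A'_def\<close>)
    finally show "(A *\<^sub>v v) $ i = 0\<^sub>v e $ i" using v(3) i ed by simp
  qed (use A in simp)
  with inj v show False by auto
qed

lemma mult_eq_smult_one_dim_le:
  assumes A: "(A :: complex mat) \<in> carrier_mat n m" and B: "B \<in> carrier_mat m n"
    and AB: "A * B = c \<cdot>\<^sub>m 1\<^sub>m n" and "c \<noteq> 0"
  shows "n \<le> m"
proof (rule injective_mat_dim_le[OF B])
  fix v assume v: "v \<in> carrier_vec n" and Bv: "B *\<^sub>v v = 0\<^sub>v m"
  have "c \<cdot>\<^sub>v v = (A * B) *\<^sub>v v" using v by (simp add: AB smult_mat_mult_vec[of _ n n])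
  also have "\<dots> = 0\<^sub>v n" using A B v Bv by (simp add: mult_mat_vec_zero)
  finally have cv: "c \<cdot>\<^sub>v v = 0\<^sub>v n" .
  show "v = 0\<^sub>v n"
  proof (rule eq_vecI)
    fix i assume i: "i < dim_vec (0\<^sub>v n :: complex vec)"
    then have "c * v $ i = 0" using v arg_cong[OF cv, of "\<lambda>u. u $ i"] by simp
    then show "v $ i = 0\<^sub>v n $ i" using \<open>c \<noteq> 0\<close> i by simp
  qed (use v in simp)
qed

lemma surjective_mat_dim_le:
  assumes S: "(S :: complex mat) \<in> carrier_mat n L"
    and surj: "\<And>v. v \<in> carrier_vec n \<Longrightarrow> \<exists>c\<in>carrier_vec L. S *\<^sub>v c = v"
  shows "n \<le> L"
proof -
  obtain pre where pre: "\<And>i. i < n \<Longrightarrow> pre i \<in> carrier_vec L \<and> S *\<^sub>v pre i = unit_vec n i"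
    using surj[OF unit_vec_carrier] by metis
  define C where "C = mat L n (\<lambda>(k,j). pre j $ k)"
  have C: "C \<in> carrier_mat L n" by (simp add: C_def)
  have "S * C = 1 \<cdot>\<^sub>m 1\<^sub>m n"
  proof (rule eq_matI)
    fix i j assume ij: "i < dim_row (1 \<cdot>\<^sub>m 1\<^sub>m n :: complex mat)" "j < dim_col (1 \<cdot>\<^sub>m 1\<^sub>m n :: complex mat)"
    have "(S * C) $$ (i,j) = (\<Sum>k<L. S $$ (i,k) * pre j $ k)"
      using ij by (subst mult_mat_nth[OF S C]) (auto simp: C_def)
    also have "\<dots> = (S *\<^sub>v pre j) $ i"
      by (rule mult_mat_vec_nth[OF S, symmetric]) (use ij pre[of j] in auto)
    also have "\<dots> = (1 \<cdot>\<^sub>m 1\<^sub>m n) $$ (i,j)" using pre[of j] ij by auto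
    finally show "(S * C) $$ (i,j) = (1 \<cdot>\<^sub>m 1\<^sub>m n) $$ (i,j)" .
  qed (use S C in auto)
  then show ?thesis by (rule mult_eq_smult_one_dim_le[OF S C]) simp
qed

section \<open>Independent lists of vectors\<close>

definition lin_indep_list :: "nat \<Rightarrow> complex vec list \<Rightarrow> bool" where
  "lin_indep_list n vs \<longleftrightarrow> set vs \<subseteq> carrier_vec n \<and>
     (\<forall>c\<in>carrier_vec (length vs). mat_of_cols n vs *\<^sub>v c = 0\<^sub>v n \<longrightarrow> c = 0\<^sub>v (length vs))"

definition in_span_list :: "nat \<Rightarrow> complex vec list \<Rightarrow> complex vec \<Rightarrow> bool" where
  "in_span_list n vs v \<longleftrightarrow> (\<exists>c\<in>carrier_vec (length vs). mat_of_cols n vs *\<^sub>v c = v)"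

lemma mat_of_cols_mult_vec_nth:
  "c \<in> carrier_vec (length vs) \<Longrightarrow> i < n \<Longrightarrow>
   (mat_of_cols n vs *\<^sub>v c) $ i = (\<Sum>j<length vs. vs ! j $ i * c $ j)"
  by (subst mult_mat_vec_nth[OF mat_of_cols_carrier(1)]) (auto simp: mat_of_cols_index)

lemma mat_of_cols_Nil_mult_vec: "c \<in> carrier_vec 0 \<Longrightarrow> mat_of_cols n [] *\<^sub>v c = 0\<^sub>v n"
  by (rule eq_vecI) (auto simp: mat_of_cols_mult_vec_nth simp del: index_mult_mat_vec)

lemma mat_of_cols_Cons_mult_vec:
  assumes c: "(c :: complex vec) \<in> carrier_vec (Suc (length vs))" and v: "v \<in> carrier_vec n"
  shows "mat_of_cols n (v # vs) *\<^sub>v c =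
    c $ 0 \<cdot>\<^sub>v v + mat_of_cols n vs *\<^sub>v vec (length vs) (\<lambda>j. c $ Suc j)"
proof (rule eq_vecI)
  fix i assume "i < dim_vec (c $ 0 \<cdot>\<^sub>v v + mat_of_cols n vs *\<^sub>v vec (length vs) (\<lambda>j. c $ Suc j))"
  hence i: "i < n" using v by simp
  have "(mat_of_cols n (v # vs) *\<^sub>v c) $ i = (\<Sum>j<Suc (length vs). (v # vs) ! j $ i * c $ j)"
    using c i by (subst mat_of_cols_mult_vec_nth) auto
  also have "\<dots> = v $ i * c $ 0 + (\<Sum>j<length vs. vs ! j $ i * c $ Suc j)"
    by (subst sum.lessThan_Suc_shift) simp
  finally show "(mat_of_cols n (v # vs) *\<^sub>v c) $ i =
      (c $ 0 \<cdot>\<^sub>v v + mat_of_cols n vs *\<^sub>v vec (length vs) (\<lambda>j. c $ Suc j)) $ i"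
    using i v by (simp add: mat_of_cols_mult_vec_nth del: index_mult_mat_vec)
qed (use v in simp)

lemma mat_of_cols_snoc_mult_vec:
  assumes c: "(c :: complex vec) \<in> carrier_vec (Suc (length vs))" and v: "v \<in> carrier_vec n"
  shows "mat_of_cols n (vs @ [v]) *\<^sub>v c =
    mat_of_cols n vs *\<^sub>v vec (length vs) (\<lambda>j. c $ j) + c $ length vs \<cdot>\<^sub>v v"
proof (rule eq_vecI)
  fix i assume "i < dim_vec (mat_of_cols n vs *\<^sub>v vec (length vs) (\<lambda>j. c $ j) + c $ length vs \<cdot>\<^sub>v v)"
  hence i: "i < n" using v by simp
  have "(mat_of_cols n (vs @ [v]) *\<^sub>v c) $ i =
      (\<Sum>j<length vs. vs ! j $ i * c $ j) + v $ i * c $ length vs"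
    using c i by (simp add: mat_of_cols_mult_vec_nth nth_append del: index_mult_mat_vec)
  then show "(mat_of_cols n (vs @ [v]) *\<^sub>v c) $ i =
      (mat_of_cols n vs *\<^sub>v vec (length vs) (\<lambda>j. c $ j) + c $ length vs \<cdot>\<^sub>v v) $ i"
    using i v by (simp add: mat_of_cols_mult_vec_nth mult.commute del: index_mult_mat_vec)
qed (use v in simp)

lemma subspace_mat_of_cols_mult_vec:
  assumes W: "is_subspace n W"
  shows "set vs \<subseteq> W \<Longrightarrow> c \<in> carrier_vec (length vs) \<Longrightarrow> mat_of_cols n vs *\<^sub>v c \<in> W"
proof (induction vs arbitrary: c)
  case Nil
  then show ?case using W by (simp add: mat_of_cols_Nil_mult_vec is_subspace_def)
next
  case (Cons v vs)
  have v: "v \<in> carrier_vec n" using Cons W by (auto simp: is_subspace_def)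
  have "mat_of_cols n vs *\<^sub>v vec (length vs) (\<lambda>j. c $ Suc j) \<in> W" using Cons by auto
  moreover have "c $ 0 \<cdot>\<^sub>v v \<in> W" using Cons W by (auto simp: is_subspace_def)
  ultimately show ?case
    using mat_of_cols_Cons_mult_vec[of c vs v n] Cons v W by (auto simp: is_subspace_def)
qed

lemma lin_indep_list_Nil: "lin_indep_list n []"
  by (auto simp: lin_indep_list_def intro!: eq_vecI)

lemma lin_indep_list_length_le: "lin_indep_list n vs \<Longrightarrow> length vs \<le> n"
  by (rule injective_mat_dim_le[OF mat_of_cols_carrier(1)]) (auto simp: lin_indep_list_def)

lemma lin_indep_list_snoc:
  assumes indep: "lin_indep_list n vs" and v: "v \<in> carrier_vec n"
    and not_span: "\<not> in_span_list n vs v"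
  shows "lin_indep_list n (vs @ [v])"
  unfolding lin_indep_list_def
proof (intro conjI ballI impI)
  show "set (vs @ [v]) \<subseteq> carrier_vec n" using indep v by (auto simp: lin_indep_list_def)
  fix c :: "complex vec"
  assume c: "c \<in> carrier_vec (length (vs @ [v]))" and zero: "mat_of_cols n (vs @ [v]) *\<^sub>v c = 0\<^sub>v n"
  let ?k = "length vs"
  define c' where "c' = vec ?k (\<lambda>j. c $ j)"
  have c': "c' \<in> carrier_vec ?k" by (simp add: c'_def)
  have Mc': "mat_of_cols n vs *\<^sub>v c' \<in> carrier_vec n"
    by (rule mult_mat_vec_carrier[OF mat_of_cols_carrier(1) c'])
  have sum_zero: "mat_of_cols n vs *\<^sub>v c' + c $ ?k \<cdot>\<^sub>v v = 0\<^sub>v n"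
    using mat_of_cols_snoc_mult_vec[of c vs v n] c v zero by (simp add: c'_def)
  have last: "c $ ?k = 0"
  proof (rule ccontr)
    assume nz: "c $ ?k \<noteq> 0"
    have "mat_of_cols n vs *\<^sub>v ((- 1 / c $ ?k) \<cdot>\<^sub>v c') = v"
    proof (rule eq_vecI)
      fix i assume "i < dim_vec v"
      hence i: "i < n" using v by simp
      have "(mat_of_cols n vs *\<^sub>v c') $ i = - (c $ ?k * v $ i)"
        using arg_cong[OF sum_zero, of "\<lambda>x. x $ i"] i v Mc' by (simp add: eq_neg_iff_add_eq_0)
      then show "(mat_of_cols n vs *\<^sub>v ((- 1 / c $ ?k) \<cdot>\<^sub>v c')) $ i = v $ i"
        using i c' nz by (simp add: mult_mat_vec)
    qed (use v in simp)
    with not_span c' show False unfolding in_span_list_def by auto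
  qed
  have "mat_of_cols n vs *\<^sub>v c' = 0\<^sub>v n"
  proof -
    have "0 \<cdot>\<^sub>v v = 0\<^sub>v n" using v by (intro eq_vecI) auto
    then show ?thesis using sum_zero Mc' by (simp add: last)
  qed
  hence "c' = 0\<^sub>v ?k" using indep c' by (auto simp: lin_indep_list_def)
  then show "c = 0\<^sub>v (length (vs @ [v]))"
    using c last by (intro eq_vecI) (auto simp: c'_def less_Suc_eq elim!: vec_eq_iff[THEN iffD1, elim_format])
qed

lemma lin_indep_list_extend:
  assumes U: "U \<subseteq> carrier_vec n"
  shows "lin_indep_list n B \<Longrightarrow> set B \<subseteq> U \<Longrightarrow>
    \<exists>C. set C \<subseteq> U \<and> lin_indep_list n (B @ C) \<and> (\<forall>u\<in>U. in_span_list n (B @ C) u)"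
proof (induction "n - length B" arbitrary: B rule: less_induct)
  case less
  show ?case
  proof (cases "\<forall>u\<in>U. in_span_list n B u")
    case True
    then show ?thesis using less by (intro exI[of _ "[]"]) auto
  next
    case False
    then obtain u where u: "u \<in> U" "\<not> in_span_list n B u" by auto
    have indep: "lin_indep_list n (B @ [u])" using lin_indep_list_snoc[OF less(2) _ u(2)] u U by auto
    hence "n - length (B @ [u]) < n - length B" using lin_indep_list_length_le by fastforce
    from less(1)[OF this indep] less(3) u obtain C where
      "set C \<subseteq> U" "lin_indep_list n (B @ [u] @ C)" "\<forall>v\<in>U. in_span_list n (B @ [u] @ C) v" by auto
    then show ?thesis using u by (intro exI[of _ "u # C"]) auto
  qed
qed

lemma spanning_lin_indep_list_invertible:
  assumes indep: "lin_indep_list d vs" and span: "\<And>u. u \<in> carrier_vec d \<Longrightarrow> in_span_list d vs u"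
  obtains T where "length vs = d" "T \<in> carrier_mat d d" "T * mat_of_cols d vs = 1\<^sub>m d"
proof -
  have "length vs \<le> d" by (rule lin_indep_list_length_le[OF indep])
  moreover have "d \<le> length vs"
    by (rule surjective_mat_dim_le[OF mat_of_cols_carrier(1)]) (use span in \<open>auto simp: in_span_list_def\<close>)
  ultimately have len: "length vs = d" by simp
  then have S: "mat_of_cols d vs \<in> carrier_mat d d" using mat_of_cols_carrier(1)[of d vs] by simp
  have "det (mat_of_cols d vs) \<noteq> 0"
    by (rule det_nonzero_if_injective[OF S]) (use indep len in \<open>auto simp: lin_indep_list_def\<close>)
  then show ?thesis using det_nonzero_imp_inverse_mat[OF S] that len by blast
qed

lemma in_span_list_append:
  assumes "in_span_list n B w"
  obtains c where "c \<in> carrier_vec (length (B @ C))" "mat_of_cols n (B @ C) *\<^sub>v c = w"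
    "\<And>k. length B \<le> k \<Longrightarrow> k < length (B @ C) \<Longrightarrow> c $ k = 0"
proof -
  obtain c where c: "c \<in> carrier_vec (length B)" "mat_of_cols n B *\<^sub>v c = w"
    using assms by (auto simp: in_span_list_def)
  define c' where "c' = vec (length (B @ C)) (\<lambda>k. if k < length B then c $ k else 0)"
  have "mat_of_cols n (B @ C) *\<^sub>v c' = w"
  proof (rule eq_vecI)
    fix k assume "k < dim_vec w"
    hence k: "k < n" using c(2) by auto
    have "(mat_of_cols n (B @ C) *\<^sub>v c') $ k =
        (\<Sum>l<length (B @ C). if l < length B then B ! l $ k * c $ l else 0)"
      using k by (subst mat_of_cols_mult_vec_nth) (auto simp: c'_def nth_append intro!: sum.cong)
    also have "\<dots> = (\<Sum>l<length B. B ! l $ k * c $ l)" by (rule sum_lessThan_if_less) simp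
    also have "\<dots> = w $ k" using k c mat_of_cols_mult_vec_nth[of c B k n] by auto
    finally show "(mat_of_cols n (B @ C) *\<^sub>v c') $ k = w $ k" .
  qed (use c(2) in auto)
  then show ?thesis using that[of c'] by (auto simp: c'_def)
qed

lemma subspace_adapted_basis:
  assumes W: "is_subspace d W" and nonzero: "W \<noteq> {0\<^sub>v d}" and proper: "W \<noteq> carrier_vec d"
  obtains m S T where "0 < m" "m < d" "S \<in> carrier_mat d d" "T \<in> carrier_mat d d" "T * S = 1\<^sub>m d"
    "\<And>j. j < m \<Longrightarrow> col S j \<in> W"
    "\<And>w. w \<in> W \<Longrightarrow> \<exists>c\<in>carrier_vec d. S *\<^sub>v c = w \<and> (\<forall>k. m \<le> k \<longrightarrow> k < d \<longrightarrow> c $ k = 0)"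
proof -
  have Wc: "W \<subseteq> carrier_vec d" and W0: "0\<^sub>v d \<in> W" using W by (auto simp: is_subspace_def)
  obtain B where B: "set B \<subseteq> W" "lin_indep_list d B" "\<forall>u\<in>W. in_span_list d B u"
    using lin_indep_list_extend[OF Wc lin_indep_list_Nil] by auto
  obtain C where C: "lin_indep_list d (B @ C)" "\<forall>u\<in>carrier_vec d. in_span_list d (B @ C) u"
    using lin_indep_list_extend[OF subset_refl B(2)] B(1) Wc by blast
  obtain T where len: "length (B @ C) = d" and T: "T \<in> carrier_mat d d"
    and TS: "T * mat_of_cols d (B @ C) = 1\<^sub>m d"
    using spanning_lin_indep_list_invertible[OF C(1)] C(2) by blast
  define S where "S = mat_of_cols d (B @ C)"
  define m where "m = length B"
  have S: "S \<in> carrier_mat d d" using mat_of_cols_carrier(1)[of d "B @ C"] len by (simp add: S_def)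
  have "0 < m"
  proof (rule ccontr)
    assume "\<not> 0 < m"
    hence "B = []" by (simp add: m_def)
    obtain w where "w \<in> W" "w \<noteq> 0\<^sub>v d" using nonzero W0 by auto
    with B(3) \<open>B = []\<close> show False by (auto simp: in_span_list_def mat_of_cols_Nil_mult_vec)
  qed
  moreover have "m < d"
  proof (rule ccontr)
    assume "\<not> m < d"
    hence "length C = 0" using len unfolding m_def length_append by linarith
    hence "C = []" by simp
    have "carrier_vec d \<subseteq> W"
    proof
      fix u :: "complex vec" assume "u \<in> carrier_vec d"
      then obtain c where "c \<in> carrier_vec (length B)" "mat_of_cols d B *\<^sub>v c = u"
        using C(2) \<open>C = []\<close> by (auto simp: in_span_list_def)
      then show "u \<in> W" using subspace_mat_of_cols_mult_vec[OF W B(1)] by auto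
    qed
    with Wc proper show False by auto
  qed
  moreover have "col S j \<in> W" if "j < m" for j
  proof -
    have "B ! j \<in> W" using that B(1) by (auto simp: m_def)
    then show ?thesis
      unfolding S_def using that Wc by (subst col_mat_of_cols) (auto simp: nth_append m_def)
  qed
  moreover have "\<exists>c\<in>carrier_vec d. S *\<^sub>v c = w \<and> (\<forall>k. m \<le> k \<longrightarrow> k < d \<longrightarrow> c $ k = 0)" if w: "w \<in> W" for w
  proof -
    obtain c where "c \<in> carrier_vec (length (B @ C))" "mat_of_cols d (B @ C) *\<^sub>v c = w"
      "\<And>k. length B \<le> k \<Longrightarrow> k < length (B @ C) \<Longrightarrow> c $ k = 0"
      using in_span_list_append[OF B(3)[rule_format, OF w]] by blast
    then show ?thesis using len by (auto simp: S_def m_def)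
  qed
  ultimately show ?thesis using that S T TS[folded S_def] by blast
qed

section \<open>Representations and their characters\<close>

lemma rep_carrier: "is_rep G d \<rho> \<Longrightarrow> g \<in> carrier G \<Longrightarrow> \<rho> g \<in> carrier_mat d d"
  by (simp add: is_rep_def)

lemma rep_mult:
  "is_rep G d \<rho> \<Longrightarrow> g \<in> carrier G \<Longrightarrow> h \<in> carrier G \<Longrightarrow> \<rho> (g \<otimes>\<^bsub>G\<^esub> h) = \<rho> g * \<rho> h"
  by (simp add: is_rep_def)

lemma rep_one: "is_rep G d \<rho> \<Longrightarrow> \<rho> \<one>\<^bsub>G\<^esub> = 1\<^sub>m d"
  by (simp add: is_rep_def)

lemma irred_rep_is_rep: "is_irred_rep G d \<rho> \<Longrightarrow> is_rep G d \<rho>"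
  by (simp add: is_irred_rep_def)

lemma character_in_carrier: "g \<in> carrier G \<Longrightarrow> character G \<rho> g = mat_trace (\<rho> g)"
  by (simp add: character_def)

lemma rep_conj:
  assumes rep: "is_rep G d \<rho>" and S: "S \<in> carrier_mat d d" and T: "T \<in> carrier_mat d d"
    and TS: "T * S = 1\<^sub>m d"
  shows "is_rep G d (\<lambda>g. T * \<rho> g * S)" "\<And>g. character G (\<lambda>g. T * \<rho> g * S) g = character G \<rho> g"
proof -
  have ST: "S * T = 1\<^sub>m d" using S T TS by (metis mat_mult_left_right_inverse)
  have \<rho>: "\<And>g. g \<in> carrier G \<Longrightarrow> \<rho> g \<in> carrier_mat d d" using rep by (rule rep_carrier)
  have "T * \<rho> (g \<otimes>\<^bsub>G\<^esub> h) * S = (T * \<rho> g * S) * (T * \<rho> h * S)"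
    if g: "g \<in> carrier G" and h: "h \<in> carrier G" for g h
  proof -
    have "(T * \<rho> g * S) * (T * \<rho> h * S) = T * (\<rho> g * ((S * T) * (\<rho> h * S)))"
      using \<rho>[OF g] \<rho>[OF h] S T by (simp add: assoc_mult_mat[of _ d d _ d _ d])
    also have "\<dots> = T * \<rho> (g \<otimes>\<^bsub>G\<^esub> h) * S"
      using \<rho>[OF g] \<rho>[OF h] S T rep_mult[OF rep g h] by (simp add: ST assoc_mult_mat[of _ d d _ d _ d])
    finally show ?thesis by simp
  qed
  then show "is_rep G d (\<lambda>g. T * \<rho> g * S)"
    using rep S T TS by (auto simp: is_rep_def)
  show "character G (\<lambda>g. T * \<rho> g * S) g = character G \<rho> g" for g
    using mat_trace_conj[OF \<rho> S T TS] by (simp add: character_def)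
qed

definition diag_block :: "nat \<Rightarrow> nat \<Rightarrow> 'x mat \<Rightarrow> 'x mat" where
  "diag_block a b A = mat b b (\<lambda>(i,j). A $$ (i + a, j + a))"

lemma diag_block_carrier [simp]: "diag_block a b A \<in> carrier_mat b b"
  by (simp add: diag_block_def)

lemma diag_block_one: "a + b \<le> d \<Longrightarrow> diag_block a b (1\<^sub>m d) = (1\<^sub>m b :: 'x :: semiring_1 mat)"
  by (rule eq_matI) (auto simp: diag_block_def)

lemma diag_block_mult:
  assumes A: "(A :: 'x :: comm_semiring_1 mat) \<in> carrier_mat d d" and B: "B \<in> carrier_mat d d"
    and ab: "a + b \<le> d"
    and off: "\<And>i j k. i < b \<Longrightarrow> j < b \<Longrightarrow> k < d \<Longrightarrow> k \<notin> {a..<a + b} \<Longrightarrow>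
      A $$ (i + a, k) * B $$ (k, j + a) = 0"
  shows "diag_block a b (A * B) = diag_block a b A * diag_block a b B"
proof (rule eq_matI)
  fix i j assume "i < dim_row (diag_block a b A * diag_block a b B)"
    "j < dim_col (diag_block a b A * diag_block a b B)"
  hence ij: "i < b" "j < b" by (auto simp: diag_block_def)
  have "diag_block a b (A * B) $$ (i,j) = (\<Sum>k<d. A $$ (i + a, k) * B $$ (k, j + a))"
    using ij ab by (simp add: diag_block_def mult_mat_nth[OF A B])
  also have "\<dots> = (\<Sum>k\<in>{a..<a + b}. A $$ (i + a, k) * B $$ (k, j + a))"
    using ij off ab by (intro sum.mono_neutral_right) auto
  also have "\<dots> = (\<Sum>k<b. A $$ (i + a, k + a) * B $$ (k + a, j + a))"
    using sum.shift_bounds_nat_ivl[of "\<lambda>k. A $$ (i + a, k) * B $$ (k, j + a)" 0 a b]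
    by (simp add: atLeast0LessThan add.commute)
  also have "\<dots> = (diag_block a b A * diag_block a b B) $$ (i,j)"
    using ij by (subst mult_mat_nth[of _ b b _ b]) (auto simp: diag_block_def)
  finally show "diag_block a b (A * B) $$ (i,j) = (diag_block a b A * diag_block a b B) $$ (i,j)" .
qed (auto simp: diag_block_def)

lemma block_triangular_rep_split:
  assumes rep: "is_rep G d \<rho>" and md: "m \<le> d"
    and zero: "\<And>g i j. g \<in> carrier G \<Longrightarrow> m \<le> i \<Longrightarrow> i < d \<Longrightarrow> j < m \<Longrightarrow> \<rho> g $$ (i,j) = 0"
  shows "is_rep G m (\<lambda>g. diag_block 0 m (\<rho> g))" "is_rep G (d - m) (\<lambda>g. diag_block m (d - m) (\<rho> g))"
    "\<And>g. g \<in> carrier G \<Longrightarrow> character G \<rho> g =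
      character G (\<lambda>g. diag_block 0 m (\<rho> g)) g + character G (\<lambda>g. diag_block m (d - m) (\<rho> g)) g"
proof -
  have \<rho>: "\<And>g. g \<in> carrier G \<Longrightarrow> \<rho> g \<in> carrier_mat d d" using rep by (rule rep_carrier)
  show "is_rep G m (\<lambda>g. diag_block 0 m (\<rho> g))"
    using md zero rep_mult[OF rep] unfolding is_rep_def
    by (auto simp: rep_one[OF rep] diag_block_one intro!: diag_block_mult[OF \<rho> \<rho>])
  show "is_rep G (d - m) (\<lambda>g. diag_block m (d - m) (\<rho> g))"
    using md zero rep_mult[OF rep] unfolding is_rep_def
    by (auto simp: rep_one[OF rep] diag_block_one intro!: diag_block_mult[OF \<rho> \<rho>])
  show "character G \<rho> g =
      character G (\<lambda>g. diag_block 0 m (\<rho> g)) g + character G (\<lambda>g. diag_block m (d - m) (\<rho> g)) g"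
    if g: "g \<in> carrier G" for g
    using g md by (simp add: character_def mat_trace_carrier[OF \<rho>[OF g]] sum_lessThan_split[OF md])
      (simp add: mat_trace_def diag_block_def)
qed

lemma invariant_subspace_character_split:
  assumes rep: "is_rep G d \<rho>" and W: "is_subspace d W"
    and inv: "\<And>g w. g \<in> carrier G \<Longrightarrow> w \<in> W \<Longrightarrow> \<rho> g *\<^sub>v w \<in> W"
    and nonzero: "W \<noteq> {0\<^sub>v d}" and proper: "W \<noteq> carrier_vec d"
  obtains m \<rho>1 \<rho>2 where "0 < m" "m < d" "is_rep G m \<rho>1" "is_rep G (d - m) \<rho>2"
    "\<And>g. g \<in> carrier G \<Longrightarrow> character G \<rho> g = character G \<rho>1 g + character G \<rho>2 g"
proof -
  obtain m S T where m: "0 < m" "m < d" and S: "S \<in> carrier_mat d d" and T: "T \<in> carrier_mat d d"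
    and TS: "T * S = 1\<^sub>m d" and cols: "\<And>j. j < m \<Longrightarrow> col S j \<in> W"
    and coords: "\<And>w. w \<in> W \<Longrightarrow> \<exists>c\<in>carrier_vec d. S *\<^sub>v c = w \<and> (\<forall>k. m \<le> k \<longrightarrow> k < d \<longrightarrow> c $ k = 0)"
    using subspace_adapted_basis[OF W nonzero proper] by blast
  have zero: "(T * \<rho> g * S) $$ (i,j) = 0" if g: "g \<in> carrier G" and ij: "m \<le> i" "i < d" "j < m" for g i j
  proof -
    have \<rho>g: "\<rho> g \<in> carrier_mat d d" using rep g by (rule rep_carrier)
    obtain c where c: "c \<in> carrier_vec d" "S *\<^sub>v c = \<rho> g *\<^sub>v col S j" and "c $ i = 0"
      using coords[OF inv[OF g cols]] ij by blast
    have "col (T * \<rho> g * S) j = (T * \<rho> g) *\<^sub>v col S j"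
      by (rule col_mult2[of _ d d _ d]) (use T \<rho>g S ij m in auto)
    also have "\<dots> = T *\<^sub>v (S *\<^sub>v c)"
      using T \<rho>g S c(2) ij m by (simp add: assoc_mult_mat_vec[of _ d d _ d] carrier_vecI)
    also have "\<dots> = (T * S) *\<^sub>v c"
      using T S c(1) by simp
    also have "\<dots> = c" using TS c by simp
    finally have "col (T * \<rho> g * S) j = c" .
    moreover have "(T * \<rho> g * S) $$ (i,j) = col (T * \<rho> g * S) j $ i"
      using T \<rho>g S ij m by simp
    ultimately show ?thesis using \<open>c $ i = 0\<close> by simp
  qed
  let ?\<rho>' = "\<lambda>g. T * \<rho> g * S"
  have rep': "is_rep G d ?\<rho>'" and char': "\<And>g. character G ?\<rho>' g = character G \<rho> g"
    using rep_conj[OF rep S T TS] by auto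
  have "m \<le> d" using m by simp
  note split = block_triangular_rep_split[OF rep' this zero]
  show ?thesis
  proof (rule that[OF m split(1,2)])
    fix g assume "g \<in> carrier G"
    then show "character G \<rho> g =
        character G (\<lambda>g. diag_block 0 m (?\<rho>' g)) g + character G (\<lambda>g. diag_block m (d - m) (?\<rho>' g)) g"
      using split(3) char'[of g] by simp
  qed
qed

lemma character_sum_irr_chars:
  assumes fin: "finite (irr_chars G)"
  shows "is_rep G d \<rho> \<Longrightarrow> \<exists>c. \<forall>g\<in>carrier G. character G \<rho> g = (\<Sum>\<psi>\<in>irr_chars G. c \<psi> * \<psi> g)"
proof (induction d arbitrary: \<rho> rule: less_induct)
  case (less d)
  show ?case
  proof (cases "is_irred_rep G d \<rho>")
    case True
    hence irr: "character G \<rho> \<in> irr_chars G" by (auto simp: irr_chars_def)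
    show ?thesis
    proof (intro exI[of _ "\<lambda>\<psi>. if \<psi> = character G \<rho> then 1 else 0"] ballI)
      fix g
      have "(\<Sum>\<psi>\<in>irr_chars G. (if \<psi> = character G \<rho> then 1 else 0) * \<psi> g) =
          (\<Sum>\<psi>\<in>irr_chars G. if \<psi> = character G \<rho> then \<psi> g else 0)"
        by (intro sum.cong) auto
      then show "character G \<rho> g = (\<Sum>\<psi>\<in>irr_chars G. (if \<psi> = character G \<rho> then 1 else 0) * \<psi> g)"
        using fin irr by (simp add: sum.delta')
    qed
  next
    case False
    show ?thesis
    proof (cases "d = 0")
      case True
      have "character G \<rho> g = 0" if "g \<in> carrier G" for g
        using rep_carrier[OF less(2) that] True that by (simp add: character_def mat_trace_def)
      then show ?thesis by (intro exI[of _ "\<lambda>_. 0"]) simp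
    next
      case False
      with \<open>\<not> is_irred_rep G d \<rho>\<close> less(2) obtain W where W: "is_subspace d W"
        and inv: "\<And>g w. g \<in> carrier G \<Longrightarrow> w \<in> W \<Longrightarrow> \<rho> g *\<^sub>v w \<in> W"
        and nonzero: "W \<noteq> {0\<^sub>v d}" and proper: "W \<noteq> carrier_vec d"
        unfolding is_irred_rep_def by auto
      obtain m \<rho>1 \<rho>2 where m: "0 < m" "m < d" and reps: "is_rep G m \<rho>1" "is_rep G (d - m) \<rho>2"
        and split: "\<And>g. g \<in> carrier G \<Longrightarrow> character G \<rho> g = character G \<rho>1 g + character G \<rho>2 g"
        using invariant_subspace_character_split[OF less(2) W inv nonzero proper] by blast
      obtain c1 where "\<forall>g\<in>carrier G. character G \<rho>1 g = (\<Sum>\<psi>\<in>irr_chars G. c1 \<psi> * \<psi> g)"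
        using less(1)[OF m(2) reps(1)] by blast
      moreover obtain c2 where "\<forall>g\<in>carrier G. character G \<rho>2 g = (\<Sum>\<psi>\<in>irr_chars G. c2 \<psi> * \<psi> g)"
        using less(1)[OF _ reps(2)] m by auto
      ultimately show ?thesis
        by (intro exI[of _ "\<lambda>\<psi>. c1 \<psi> + c2 \<psi>"]) (simp add: split sum.distrib distrib_right)
    qed
  qed
qed

section \<open>Schur's lemma\<close>

lemma intertwiner_zero_or_injective:
  assumes irr: "is_irred_rep G d \<rho>" and A: "(A :: complex mat) \<in> carrier_mat e d"
    and \<sigma>: "\<And>g. g \<in> carrier G \<Longrightarrow> \<sigma> g \<in> carrier_mat e e"
    and intertw: "\<And>g. g \<in> carrier G \<Longrightarrow> \<sigma> g * A = A * \<rho> g"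
  shows "A = 0\<^sub>m e d \<or> (\<forall>v\<in>carrier_vec d. A *\<^sub>v v = 0\<^sub>v e \<longrightarrow> v = 0\<^sub>v d)"
proof -
  define K where "K = {v \<in> carrier_vec d. A *\<^sub>v v = 0\<^sub>v e}"
  have rep: "is_rep G d \<rho>" using irr by (rule irred_rep_is_rep)
  have "is_subspace d K" unfolding is_subspace_def K_def
    using A by (auto simp: mult_add_distrib_mat_vec mult_mat_vec)
  moreover have "\<rho> g *\<^sub>v w \<in> K" if g: "g \<in> carrier G" and w: "w \<in> K" for g w
  proof -
    have \<rho>g: "\<rho> g \<in> carrier_mat d d" using rep g by (rule rep_carrier)
    have "A *\<^sub>v (\<rho> g *\<^sub>v w) = (\<sigma> g * A) *\<^sub>v w" using A \<rho>g w intertw[OF g] by (simp add: K_def)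
    also have "\<dots> = 0\<^sub>v e" using A \<sigma>[OF g] w by (auto simp: K_def)
    finally show ?thesis using w \<rho>g by (simp add: K_def)
  qed
  ultimately have "K = {0\<^sub>v d} \<or> K = carrier_vec d" using irr by (simp add: is_irred_rep_def)
  then show ?thesis
    using mat_eq_zeroI[OF A] by (auto simp: K_def)
qed

lemma intertwiner_zero_or_surjective:
  assumes irr: "is_irred_rep G e \<sigma>" and A: "(A :: complex mat) \<in> carrier_mat e d"
    and \<rho>: "\<And>g. g \<in> carrier G \<Longrightarrow> \<rho> g \<in> carrier_mat d d"
    and intertw: "\<And>g. g \<in> carrier G \<Longrightarrow> \<sigma> g * A = A * \<rho> g"
  shows "A = 0\<^sub>m e d \<or> (\<forall>u\<in>carrier_vec e. \<exists>v\<in>carrier_vec d. A *\<^sub>v v = u)"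
proof -
  define I where "I = (\<lambda>v. A *\<^sub>v v) ` carrier_vec d"
  have rep: "is_rep G e \<sigma>" using irr by (rule irred_rep_is_rep)
  have "is_subspace e I" unfolding is_subspace_def
  proof (intro conjI ballI allI)
    show "I \<subseteq> carrier_vec e" "0\<^sub>v e \<in> I"
      using A by (auto simp: I_def intro!: image_eqI[of _ _ "0\<^sub>v d"])
    show "x + y \<in> I" if "x \<in> I" "y \<in> I" for x y
      using that A by (auto simp: I_def mult_add_distrib_mat_vec[symmetric] intro!: image_eqI)
    show "c \<cdot>\<^sub>v x \<in> I" if "x \<in> I" for c x
      using that A by (auto simp: I_def mult_mat_vec[symmetric] intro!: image_eqI)
  qed
  moreover have "\<sigma> g *\<^sub>v w \<in> I" if g: "g \<in> carrier G" and w: "w \<in> I" for g w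
  proof -
    obtain v where v: "v \<in> carrier_vec d" "w = A *\<^sub>v v" using w by (auto simp: I_def)
    have "\<sigma> g *\<^sub>v w = (\<sigma> g * A) *\<^sub>v v" using A rep_carrier[OF rep g] v by simp
    also have "\<dots> = A *\<^sub>v (\<rho> g *\<^sub>v v)" using intertw[OF g] A \<rho>[OF g] v by simp
    finally show ?thesis using \<rho>[OF g] v by (auto simp: I_def)
  qed
  ultimately have "I = {0\<^sub>v e} \<or> I = carrier_vec e" using irr by (simp add: is_irred_rep_def)
  then show ?thesis
    using mat_eq_zeroI[OF A] by (auto simp: I_def) (metis imageE)
qed

lemma schur_lemma_distinct:
  assumes irr\<rho>: "is_irred_rep G d \<rho>" and irr\<sigma>: "is_irred_rep G e \<sigma>"
    and A: "(A :: complex mat) \<in> carrier_mat e d"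
    and intertw: "\<And>g. g \<in> carrier G \<Longrightarrow> \<sigma> g * A = A * \<rho> g"
    and distinct: "character G \<sigma> \<noteq> character G \<rho>"
  shows "A = 0\<^sub>m e d"
proof (rule ccontr)
  assume nonzero: "A \<noteq> 0\<^sub>m e d"
  have rep\<rho>: "is_rep G d \<rho>" and rep\<sigma>: "is_rep G e \<sigma>"
    using irr\<rho> irr\<sigma> by (auto intro: irred_rep_is_rep)
  have inj: "\<forall>v\<in>carrier_vec d. A *\<^sub>v v = 0\<^sub>v e \<longrightarrow> v = 0\<^sub>v d"
    using intertwiner_zero_or_injective[OF irr\<rho> A rep_carrier[OF rep\<sigma>] intertw] nonzero by auto
  have surj: "\<forall>u\<in>carrier_vec e. \<exists>v\<in>carrier_vec d. A *\<^sub>v v = u"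
    using intertwiner_zero_or_surjective[OF irr\<sigma> A rep_carrier[OF rep\<rho>] intertw] nonzero by auto
  have "d \<le> e" by (rule injective_mat_dim_le[OF A]) (use inj in auto)
  moreover have "e \<le> d" by (rule surjective_mat_dim_le[OF A]) (use surj in auto)
  ultimately have de: "e = d" by simp
  have Ad: "A \<in> carrier_mat d d" using A de by simp
  have "det A \<noteq> 0" by (rule det_nonzero_if_injective[OF Ad]) (use inj de in auto)
  then obtain B where B: "B \<in> carrier_mat d d" and AB: "A * B = 1\<^sub>m d"
    using det_nonzero_imp_inverse_mat[OF Ad] by metis
  have "character G \<sigma> g = character G \<rho> g" for g
  proof (cases "g \<in> carrier G")
    case True
    have \<rho>g: "\<rho> g \<in> carrier_mat d d" and \<sigma>g: "\<sigma> g \<in> carrier_mat d d"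
      using rep_carrier[OF rep\<rho> True] rep_carrier[OF rep\<sigma> True] de by auto
    have "\<sigma> g = \<sigma> g * A * B" using \<sigma>g Ad B AB by (simp add: assoc_mult_mat[of _ d d _ d _ d])
    also have "\<dots> = A * \<rho> g * B" using intertw[OF True] by simp
    finally show ?thesis
      using True mat_trace_conj[OF \<rho>g B Ad AB] by (simp add: character_def)
  qed (simp add: character_def)
  with distinct show False by auto
qed

lemma schur_lemma_scalar:
  assumes irr: "is_irred_rep G d \<rho>" and A: "(A :: complex mat) \<in> carrier_mat d d"
    and intertw: "\<And>g. g \<in> carrier G \<Longrightarrow> \<rho> g * A = A * \<rho> g"
  obtains a where "A = a \<cdot>\<^sub>m 1\<^sub>m d"
proof -
  have rep: "is_rep G d \<rho>" and "d > 0" using irr by (auto simp: is_irred_rep_def)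
  obtain a where "a \<in> spectrum A" using spectrum_non_empty[OF A \<open>d > 0\<close>] by auto
  then obtain v where v: "v \<in> carrier_vec d" "v \<noteq> 0\<^sub>v d" "A *\<^sub>v v = a \<cdot>\<^sub>v v"
    using A by (auto simp: spectrum_def eigenvalue_def eigenvector_def)
  define B where "B = A - a \<cdot>\<^sub>m 1\<^sub>m d"
  have B: "B \<in> carrier_mat d d" unfolding B_def by (rule minus_carrier_mat) simp
  have comm: "\<rho> g * B = B * \<rho> g" if g: "g \<in> carrier G" for g
  proof -
    have \<rho>g: "\<rho> g \<in> carrier_mat d d" using rep g by (rule rep_carrier)
    have "\<rho> g * B = \<rho> g * A - a \<cdot>\<^sub>m \<rho> g"
      using \<rho>g A by (simp add: B_def mult_minus_distrib_mat mult_smult_distrib[of _ d d _ d])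
    also have "\<dots> = B * \<rho> g"
      using \<rho>g A intertw[OF g] by (simp add: B_def minus_mult_distrib_mat mult_smult_assoc_mat[of _ d d _ d])
    finally show ?thesis .
  qed
  have "B *\<^sub>v v = 0\<^sub>v d"
    using v A by (simp add: B_def minus_mult_distrib_mat_vec smult_mat_mult_vec[of _ d d])
  then have "B = 0\<^sub>m d d"
    using intertwiner_zero_or_injective[where \<sigma> = \<rho>, OF irr B rep_carrier[OF rep] comm] v by auto
  have "A = a \<cdot>\<^sub>m 1\<^sub>m d"
  proof (rule eq_matI)
    fix i j assume ij: "i < dim_row (a \<cdot>\<^sub>m 1\<^sub>m d)" "j < dim_col (a \<cdot>\<^sub>m (1\<^sub>m d :: complex mat))"
    have "B $$ (i,j) = 0" using \<open>B = 0\<^sub>m d d\<close> ij by simp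
    then show "A $$ (i,j) = (a \<cdot>\<^sub>m 1\<^sub>m d) $$ (i,j)" using ij A by (simp add: B_def)
  qed (use A in auto)
  then show ?thesis by (rule that)
qed

section \<open>Orthogonality relations\<close>

locale finite_group = group G for G :: "('a, 'b) monoid_scheme" (structure) +
  assumes finite_carrier: "finite (carrier G)"

definition intertwiner_sum ::
    "('a, 'b) monoid_scheme \<Rightarrow> ('a \<Rightarrow> complex mat) \<Rightarrow> ('a \<Rightarrow> complex mat) \<Rightarrow> complex mat \<Rightarrow>
     nat \<Rightarrow> nat \<Rightarrow> complex mat" where
  "intertwiner_sum G \<sigma> \<rho> E e d = mat_sum e d (\<lambda>g. \<sigma> g * E * \<rho> (inv\<^bsub>G\<^esub> g)) (carrier G)"

lemma intertwiner_sum_carrier [simp]: "intertwiner_sum G \<sigma> \<rho> E e d \<in> carrier_mat e d"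
  by (simp add: intertwiner_sum_def)

context group
begin

lemma rep_mult_inv: "is_rep G d \<rho> \<Longrightarrow> g \<in> carrier G \<Longrightarrow> \<rho> g * \<rho> (inv g) = 1\<^sub>m d"
  using rep_mult[of G d \<rho> g "inv g"] rep_one[of G d \<rho>] by simp

lemma bij_betw_mult_left: "h \<in> carrier G \<Longrightarrow> bij_betw (\<lambda>x. h \<otimes> x) (carrier G) (carrier G)"
  by (rule bij_betw_byWitness[where f' = "\<lambda>x. inv h \<otimes> x"]) (auto simp: m_assoc[symmetric])

lemma intertwiner_sum_mat_unit_nth:
  assumes \<sigma>: "is_rep G e \<sigma>" and \<rho>: "is_rep G d \<rho>" and "a < e" "i < e" "l < d" "b < d"
  shows "intertwiner_sum G \<sigma> \<rho> (mat_unit e d i l) e d $$ (a,b) =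
    (\<Sum>g\<in>carrier G. \<sigma> g $$ (a,i) * \<rho> (inv g) $$ (l,b))"
  using assms by (simp add: intertwiner_sum_def mat_sum_def
      mult_mat_unit_mult_nth[OF rep_carrier[OF \<sigma>] rep_carrier[OF \<rho> inv_closed]])

end

context finite_group
begin

lemma intertwiner_sum_intertwines:
  assumes \<sigma>: "is_rep G e \<sigma>" and \<rho>: "is_rep G d \<rho>" and E: "E \<in> carrier_mat e d" and h: "h \<in> carrier G"
  shows "\<sigma> h * intertwiner_sum G \<sigma> \<rho> E e d = intertwiner_sum G \<sigma> \<rho> E e d * \<rho> h"
proof -
  have \<sigma>c: "\<And>g. g \<in> carrier G \<Longrightarrow> \<sigma> g \<in> carrier_mat e e" using rep_carrier[OF \<sigma>] .
  have \<rho>c: "\<And>g. g \<in> carrier G \<Longrightarrow> \<rho> g \<in> carrier_mat d d" using rep_carrier[OF \<rho>] .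
  define X where "X = (\<lambda>g. \<sigma> g * E * \<rho> (inv g))"
  have X: "X g \<in> carrier_mat e d" if "g \<in> carrier G" for g
    unfolding X_def using that \<sigma>c \<rho>c E by (meson mult_carrier_mat inv_closed)
  have shift: "\<sigma> h * X g = X (h \<otimes> g) * \<rho> h" if g: "g \<in> carrier G" for g
  proof -
    have "\<rho> (inv (h \<otimes> g)) * \<rho> h = \<rho> (inv (h \<otimes> g) \<otimes> h)"
      using g h by (simp add: rep_mult[OF \<rho>])
    also have "inv (h \<otimes> g) \<otimes> h = inv g" using g h by (simp add: inv_mult_group m_assoc)
    finally have \<rho>_inv: "\<rho> (inv (h \<otimes> g)) * \<rho> h = \<rho> (inv g)" .
    have "X (h \<otimes> g) * \<rho> h = \<sigma> (h \<otimes> g) * E * (\<rho> (inv (h \<otimes> g)) * \<rho> h)"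
      unfolding X_def using g h \<sigma>c[of "h \<otimes> g"] \<rho>c E by (intro assoc_mult_mat[of _ e d _ d _ d]) auto
    also have "\<dots> = \<sigma> h * \<sigma> g * E * \<rho> (inv g)"
      using g h rep_mult[OF \<sigma>] \<rho>_inv by simp
    also have "\<dots> = \<sigma> h * (\<sigma> g * E) * \<rho> (inv g)"
      by (simp add: assoc_mult_mat[OF \<sigma>c[OF h] \<sigma>c[OF g] E])
    also have "\<dots> = \<sigma> h * X g"
      unfolding X_def
      by (rule assoc_mult_mat[OF \<sigma>c[OF h] mult_carrier_mat[OF \<sigma>c[OF g] E] \<rho>c[OF inv_closed[OF g]]])
    finally show ?thesis by simp
  qed
  have sum: "intertwiner_sum G \<sigma> \<rho> E e d = mat_sum e d X (carrier G)"
    by (simp add: intertwiner_sum_def X_def)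
  have "\<sigma> h * mat_sum e d X (carrier G) = mat_sum e d (\<lambda>g. \<sigma> h * X g) (carrier G)"
    by (rule mult_mat_sum[OF \<sigma>c[OF h] X])
  also have "\<dots> = mat_sum e d (\<lambda>g. X (h \<otimes> g) * \<rho> h) (carrier G)"
    by (simp add: mat_sum_def shift cong: sum.cong)
  also have "\<dots> = mat_sum e d (\<lambda>g. X g * \<rho> h) (carrier G)"
    unfolding mat_sum_def
    using sum.reindex_bij_betw[OF bij_betw_mult_left[OF h], of "\<lambda>g. (X g * \<rho> h) $$ _"] by simp
  also have "\<dots> = mat_sum e d X (carrier G) * \<rho> h"
    by (rule mat_sum_mult[OF \<rho>c[OF h] X, symmetric])
  finally show ?thesis by (simp only: sum)
qed

lemma intertwiner_sum_trace:
  assumes \<rho>: "is_rep G d \<rho>" and E: "E \<in> carrier_mat d d"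
  shows "mat_trace (intertwiner_sum G \<rho> \<rho> E d d) = of_nat (card (carrier G)) * mat_trace E"
proof -
  have \<rho>c: "\<And>g. g \<in> carrier G \<Longrightarrow> \<rho> g \<in> carrier_mat d d" using rep_carrier[OF \<rho>] .
  have conj: "mat_trace (\<rho> g * E * \<rho> (inv g)) = mat_trace E" if g: "g \<in> carrier G" for g
    by (rule mat_trace_conj[OF E \<rho>c[OF inv_closed[OF g]] \<rho>c[OF g] rep_mult_inv[OF \<rho> g]])
  have "mat_trace (intertwiner_sum G \<rho> \<rho> E d d) = (\<Sum>g\<in>carrier G. mat_trace (\<rho> g * E * \<rho> (inv g)))"
    unfolding intertwiner_sum_def
    by (rule mat_trace_mat_sum) (use \<rho>c E in \<open>meson mult_carrier_mat inv_closed\<close>)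
  also have "\<dots> = of_nat (card (carrier G)) * mat_trace E" by (simp add: conj)
  finally show ?thesis .
qed

lemma intertwiner_sum_scalar:
  assumes irr: "is_irred_rep G d \<rho>" and E: "E \<in> carrier_mat d d"
  shows "intertwiner_sum G \<rho> \<rho> E d d = (of_nat (card (carrier G)) * mat_trace E / of_nat d) \<cdot>\<^sub>m 1\<^sub>m d"
proof -
  have \<rho>: "is_rep G d \<rho>" and "d > 0" using irr by (auto simp: is_irred_rep_def)
  obtain a where a: "intertwiner_sum G \<rho> \<rho> E d d = a \<cdot>\<^sub>m 1\<^sub>m d"
    using schur_lemma_scalar[OF irr intertwiner_sum_carrier intertwiner_sum_intertwines[OF \<rho> \<rho> E]] by blast
  have "a * of_nat d = mat_trace (intertwiner_sum G \<rho> \<rho> E d d)"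
    using a by (simp add: mat_trace_smult_one)
  also have "\<dots> = of_nat (card (carrier G)) * mat_trace E"
    by (rule intertwiner_sum_trace[OF \<rho> E])
  finally have "a = of_nat (card (carrier G)) * mat_trace E / of_nat d"
    using \<open>d > 0\<close> by (simp add: eq_divide_eq)
  with a show ?thesis by simp
qed

lemma intertwiner_sum_zero:
  assumes irr\<rho>: "is_irred_rep G d \<rho>" and irr\<sigma>: "is_irred_rep G e \<sigma>" and E: "E \<in> carrier_mat e d"
    and distinct: "character G \<sigma> \<noteq> character G \<rho>"
  shows "intertwiner_sum G \<sigma> \<rho> E e d = 0\<^sub>m e d"
  using intertwiner_sum_intertwines[OF irred_rep_is_rep[OF irr\<sigma>] irred_rep_is_rep[OF irr\<rho>] E]
  by (rule schur_lemma_distinct[OF irr\<rho> irr\<sigma> intertwiner_sum_carrier _ distinct])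

lemma irr_rep_entries_orth:
  assumes irr: "is_irred_rep G d \<rho>" and "i < d" "j < d" "k < d" "l < d"
  shows "(\<Sum>g\<in>carrier G. \<rho> g $$ (i,j) * \<rho> (inv g) $$ (k,l)) =
    (if i = l \<and> j = k then of_nat (card (carrier G)) / of_nat d else 0)"
proof -
  have \<rho>: "is_rep G d \<rho>" using irr by (rule irred_rep_is_rep)
  have "(\<Sum>g\<in>carrier G. \<rho> g $$ (i,j) * \<rho> (inv g) $$ (k,l)) =
      intertwiner_sum G \<rho> \<rho> (mat_unit d d j k) d d $$ (i,l)"
    using assms by (simp add: intertwiner_sum_mat_unit_nth[OF \<rho> \<rho>])
  then show ?thesis
    using assms by (simp add: intertwiner_sum_scalar[OF irr] mat_trace_mat_unit)
qed

lemma irr_rep_entries_orth_distinct: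
  assumes irr\<rho>: "is_irred_rep G d \<rho>" and irr\<sigma>: "is_irred_rep G e \<sigma>"
    and distinct: "character G \<sigma> \<noteq> character G \<rho>" and "i < e" "j < e" "k < d" "l < d"
  shows "(\<Sum>g\<in>carrier G. \<sigma> g $$ (i,j) * \<rho> (inv g) $$ (k,l)) = 0"
proof -
  have "(\<Sum>g\<in>carrier G. \<sigma> g $$ (i,j) * \<rho> (inv g) $$ (k,l)) =
      intertwiner_sum G \<sigma> \<rho> (mat_unit e d j k) e d $$ (i,l)"
    using assms irr\<rho> irr\<sigma>
    by (simp add: intertwiner_sum_mat_unit_nth irred_rep_is_rep)
  then show ?thesis
    using assms by (simp add: intertwiner_sum_zero[OF irr\<rho> irr\<sigma> mat_unit_carrier distinct])
qed

lemma sum_character_mult_character_inv: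
  assumes \<sigma>: "is_rep G e \<sigma>" and \<rho>: "is_rep G d \<rho>"
  shows "(\<Sum>g\<in>carrier G. character G \<sigma> g * character G \<rho> (inv g)) =
    (\<Sum>i<e. \<Sum>l<d. \<Sum>g\<in>carrier G. \<sigma> g $$ (i,i) * \<rho> (inv g) $$ (l,l))"
proof -
  have "character G \<sigma> g * character G \<rho> (inv g) = (\<Sum>i<e. \<Sum>l<d. \<sigma> g $$ (i,i) * \<rho> (inv g) $$ (l,l))"
    if g: "g \<in> carrier G" for g
    using g rep_carrier[OF \<sigma> g] rep_carrier[OF \<rho> inv_closed[OF g]]
    by (simp add: character_in_carrier mat_trace_carrier sum_product)
  then have "(\<Sum>g\<in>carrier G. character G \<sigma> g * character G \<rho> (inv g)) =
      (\<Sum>g\<in>carrier G. \<Sum>i<e. \<Sum>l<d. \<sigma> g $$ (i,i) * \<rho> (inv g) $$ (l,l))"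
    by (rule sum.cong[OF refl])
  also have "\<dots> = (\<Sum>i<e. \<Sum>g\<in>carrier G. \<Sum>l<d. \<sigma> g $$ (i,i) * \<rho> (inv g) $$ (l,l))"
    by (rule sum.swap)
  also have "\<dots> = (\<Sum>i<e. \<Sum>l<d. \<Sum>g\<in>carrier G. \<sigma> g $$ (i,i) * \<rho> (inv g) $$ (l,l))"
    by (rule sum.cong[OF refl], rule sum.swap)
  finally show ?thesis .
qed

theorem character_orth:
  assumes irr\<rho>: "is_irred_rep G d \<rho>" and irr\<sigma>: "is_irred_rep G e \<sigma>"
  shows "(\<Sum>g\<in>carrier G. character G \<sigma> g * character G \<rho> (inv g)) =
    (if character G \<sigma> = character G \<rho> then of_nat (card (carrier G)) else 0)"
proof (cases "character G \<sigma> = character G \<rho>")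
  case True
  have \<rho>: "is_rep G d \<rho>" and "d > 0" using irr\<rho> by (auto simp: is_irred_rep_def)
  have "(\<Sum>g\<in>carrier G. character G \<rho> g * character G \<rho> (inv g)) =
      (\<Sum>i<d. \<Sum>l<d. if i = l then of_nat (card (carrier G)) / of_nat d else 0)"
    by (simp add: sum_character_mult_character_inv[OF \<rho> \<rho>] irr_rep_entries_orth[OF irr\<rho>])
  also have "\<dots> = of_nat (card (carrier G))" using \<open>d > 0\<close> by (simp add: sum.delta)
  finally show ?thesis using True by simp
next
  case False
  then show ?thesis
    by (simp add: sum_character_mult_character_inv[OF irred_rep_is_rep[OF irr\<sigma>] irred_rep_is_rep[OF irr\<rho>]]
        irr_rep_entries_orth_distinct[OF irr\<rho> irr\<sigma> False])
qed

lemma irr_rep_character_weighted_sum: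
  assumes irr: "is_irred_rep G d \<rho>"
  shows "mat_sum d d (\<lambda>y. character G \<rho> y \<cdot>\<^sub>m \<rho> (inv y)) (carrier G) =
    (of_nat (card (carrier G)) / of_nat d) \<cdot>\<^sub>m 1\<^sub>m d"
proof (rule eq_matI)
  have \<rho>: "is_rep G d \<rho>" using irr by (rule irred_rep_is_rep)
  fix k l assume "k < dim_row ((of_nat (card (carrier G)) / of_nat d) \<cdot>\<^sub>m (1\<^sub>m d :: complex mat))"
    "l < dim_col ((of_nat (card (carrier G)) / of_nat d) \<cdot>\<^sub>m (1\<^sub>m d :: complex mat))"
  hence kl: "k < d" "l < d" by auto
  have "(character G \<rho> y \<cdot>\<^sub>m \<rho> (inv y)) $$ (k,l) = (\<Sum>i<d. \<rho> y $$ (i,i) * \<rho> (inv y) $$ (k,l))"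
    if y: "y \<in> carrier G" for y
    using kl rep_carrier[OF \<rho> y] rep_carrier[OF \<rho> inv_closed[OF y]] y
    by (simp add: character_in_carrier mat_trace_carrier sum_distrib_right)
  then have "mat_sum d d (\<lambda>y. character G \<rho> y \<cdot>\<^sub>m \<rho> (inv y)) (carrier G) $$ (k,l) =
      (\<Sum>y\<in>carrier G. \<Sum>i<d. \<rho> y $$ (i,i) * \<rho> (inv y) $$ (k,l))"
    using kl by (simp add: mat_sum_def)
  also have "\<dots> = (\<Sum>i<d. \<Sum>y\<in>carrier G. \<rho> y $$ (i,i) * \<rho> (inv y) $$ (k,l))"
    by (rule sum.swap)
  also have "\<dots> = (\<Sum>i<d. if i = l \<and> i = k then of_nat (card (carrier G)) / of_nat d else 0)"
    using kl by (intro sum.cong refl) (simp add: irr_rep_entries_orth[OF irr])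
  also have "\<dots> = ((of_nat (card (carrier G)) / of_nat d) \<cdot>\<^sub>m 1\<^sub>m d) $$ (k,l)"
    using kl by (auto simp: sum.delta)
  finally show "mat_sum d d (\<lambda>y. character G \<rho> y \<cdot>\<^sub>m \<rho> (inv y)) (carrier G) $$ (k,l) =
      ((of_nat (card (carrier G)) / of_nat d) \<cdot>\<^sub>m 1\<^sub>m d) $$ (k,l)" .
qed (auto simp: mat_sum_def)

lemma irr_character_convolution:
  assumes irr: "is_irred_rep G d \<rho>" and h: "h \<in> carrier G"
  shows "(\<Sum>y\<in>carrier G. character G \<rho> y * character G \<rho> (inv y \<otimes> h)) =
    of_nat (card (carrier G)) / of_nat d * character G \<rho> h"
proof -
  have \<rho>: "is_rep G d \<rho>" using irr by (rule irred_rep_is_rep)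
  have \<rho>c: "\<And>g. g \<in> carrier G \<Longrightarrow> \<rho> g \<in> carrier_mat d d" using rep_carrier[OF \<rho>] .
  let ?F = "\<lambda>y. character G \<rho> y \<cdot>\<^sub>m \<rho> (inv y)"
  have F: "?F y \<in> carrier_mat d d" if "y \<in> carrier G" for y using \<rho>c that by simp
  have "character G \<rho> y * character G \<rho> (inv y \<otimes> h) = mat_trace (?F y * \<rho> h)"
    if y: "y \<in> carrier G" for y
    using y h \<rho>c[OF inv_closed[OF y]] \<rho>c[OF h]
    by (simp add: character_in_carrier rep_mult[OF \<rho>] mult_smult_assoc_mat
        mat_trace_smult[OF mult_carrier_mat[OF \<rho>c[OF inv_closed[OF y]] \<rho>c[OF h]]])
  then have "(\<Sum>y\<in>carrier G. character G \<rho> y * character G \<rho> (inv y \<otimes> h)) =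
      (\<Sum>y\<in>carrier G. mat_trace (?F y * \<rho> h))"
    by (rule sum.cong[OF refl])
  also have "\<dots> = mat_trace (mat_sum d d (\<lambda>y. ?F y * \<rho> h) (carrier G))"
    by (rule mat_trace_mat_sum[symmetric]) (rule mult_carrier_mat[OF F \<rho>c[OF h]])
  also have "\<dots> = mat_trace (mat_sum d d ?F (carrier G) * \<rho> h)"
    by (simp only: mat_sum_mult[where F = ?F and A = "carrier G", OF \<rho>c[OF h] F])
  also have "\<dots> = of_nat (card (carrier G)) / of_nat d * character G \<rho> h"
    using \<rho>c h by (simp add: irr_rep_character_weighted_sum[OF irr] mat_trace_smult_one_mult character_in_carrier)
  finally show ?thesis .
qed

lemma irr_character_conj_sum:
  assumes irr: "is_irred_rep G d \<rho>" and y: "y \<in> carrier G" and z: "z \<in> carrier G"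
  shows "(\<Sum>x\<in>carrier G. character G \<rho> (x \<otimes> y \<otimes> inv x \<otimes> z)) =
    of_nat (card (carrier G)) * character G \<rho> y / of_nat d * character G \<rho> z"
proof -
  have \<rho>: "is_rep G d \<rho>" using irr by (rule irred_rep_is_rep)
  have \<rho>c: "\<And>g. g \<in> carrier G \<Longrightarrow> \<rho> g \<in> carrier_mat d d" using rep_carrier[OF \<rho>] .
  have "(\<Sum>x\<in>carrier G. character G \<rho> (x \<otimes> y \<otimes> inv x \<otimes> z)) =
      (\<Sum>x\<in>carrier G. mat_trace (\<rho> x * \<rho> y * \<rho> (inv x) * \<rho> z))"
    using y z by (intro sum.cong refl) (simp add: character_in_carrier rep_mult[OF \<rho>])
  also have "\<dots> = mat_trace (mat_sum d d (\<lambda>x. \<rho> x * \<rho> y * \<rho> (inv x) * \<rho> z) (carrier G))"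
    by (rule mat_trace_mat_sum[symmetric]) (use y z in \<open>auto intro!: mult_carrier_mat \<rho>c\<close>)
  also have "\<dots> = mat_trace (intertwiner_sum G \<rho> \<rho> (\<rho> y) d d * \<rho> z)"
  proof -
    have "intertwiner_sum G \<rho> \<rho> (\<rho> y) d d * \<rho> z =
        mat_sum d d (\<lambda>x. \<rho> x * \<rho> y * \<rho> (inv x) * \<rho> z) (carrier G)"
      unfolding intertwiner_sum_def
      by (rule mat_sum_mult[OF \<rho>c[OF z]]) (use y in \<open>auto intro!: mult_carrier_mat \<rho>c\<close>)
    then show ?thesis by simp
  qed
  also have "\<dots> = of_nat (card (carrier G)) * character G \<rho> y / of_nat d * character G \<rho> z"
    using \<rho>c y z
    by (simp add: intertwiner_sum_scalar[OF irr] mat_trace_smult_one_mult character_in_carrier)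
  finally show ?thesis .
qed

end

definition trivial_rep :: "'a \<Rightarrow> complex mat" where
  "trivial_rep = (\<lambda>_. 1\<^sub>m 1)"

lemma is_irred_rep_trivial_rep: "is_irred_rep G 1 trivial_rep"
  unfolding is_irred_rep_def is_rep_def trivial_rep_def
proof (intro conjI allI impI ballI)
  fix W assume "is_subspace 1 W \<and> (\<forall>g\<in>carrier G. \<forall>w\<in>W. 1\<^sub>m 1 *\<^sub>v w \<in> W)"
  hence W: "W \<subseteq> carrier_vec 1" "0\<^sub>v 1 \<in> W" "\<And>c v. v \<in> W \<Longrightarrow> c \<cdot>\<^sub>v v \<in> W"
    by (auto simp: is_subspace_def)
  show "W = {0\<^sub>v 1} \<or> W = carrier_vec 1"
  proof (cases "W = {0\<^sub>v 1}")
    case False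
    then obtain w where w: "w \<in> W" "w \<noteq> 0\<^sub>v 1" using W(2) by auto
    have "w $ 0 \<noteq> 0"
    proof
      assume "w $ 0 = 0"
      hence "w = 0\<^sub>v 1" using w W(1) by (intro eq_vecI) auto
      with w show False by simp
    qed
    have "u \<in> W" if u: "u \<in> carrier_vec 1" for u :: "complex vec"
    proof -
      have "u = (u $ 0 / w $ 0) \<cdot>\<^sub>v w" using u w W(1) \<open>w $ 0 \<noteq> 0\<close> by (intro eq_vecI) auto
      then show ?thesis using W(3)[OF w(1)] by metis
    qed
    with W(1) show ?thesis by auto
  qed simp
qed auto

lemma character_trivial_rep: "g \<in> carrier G \<Longrightarrow> character G trivial_rep g = 1"
  by (simp add: character_def trivial_rep_def mat_trace_def)

context finite_group
begin

lemma irr_chars_memE: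
  assumes "\<psi> \<in> irr_chars G"
  obtains d \<rho> where "is_irred_rep G d \<rho>" "\<psi> = character G \<rho>" "\<psi> \<one>\<^bsub>G\<^esub> = of_nat d" "d > 0"
proof -
  obtain d \<rho> where irr: "is_irred_rep G d \<rho>" and \<psi>: "\<psi> = character G \<rho>"
    using assms by (auto simp: irr_chars_def)
  have "\<psi> \<one>\<^bsub>G\<^esub> = of_nat d"
    using irr rep_one[of G d \<rho>] by (simp add: \<psi> is_irred_rep_def character_def mat_trace_def)
  with irr \<psi> that show ?thesis by (auto simp: is_irred_rep_def)
qed

lemma trivial_character_in_irr_chars: "character G trivial_rep \<in> irr_chars G"
  using is_irred_rep_trivial_rep by (auto simp: irr_chars_def)

lemma irr_chars_orth:
  assumes "\<psi> \<in> irr_chars G" and "\<phi> \<in> irr_chars G"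
  shows "(\<Sum>g\<in>carrier G. \<phi> g * \<psi> (inv g)) = (if \<phi> = \<psi> then of_nat (card (carrier G)) else 0)"
  using assms by (auto simp: irr_chars_def character_orth)

lemma sum_irr_char:
  assumes \<psi>: "\<psi> \<in> irr_chars G"
  shows "(\<Sum>g\<in>carrier G. \<psi> g) = (if \<psi> = character G trivial_rep then of_nat (card (carrier G)) else 0)"
proof -
  have "(\<Sum>g\<in>carrier G. \<psi> g) = (\<Sum>g\<in>carrier G. \<psi> g * character G trivial_rep (inv g))"
    by (simp add: character_trivial_rep)
  also have "\<dots> = (if \<psi> = character G trivial_rep then of_nat (card (carrier G)) else 0)"
    by (rule irr_chars_orth[OF trivial_character_in_irr_chars \<psi>])
  finally show ?thesis .
qed

text \<open>The \<open>k \<times> |G|\<close> value matrix \<open>M\<close> of \<open>k\<close> distinct irreducible characters and the matrix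
  \<open>M'\<close> of their values at inverses satisfy \<open>M * M' = |G| \<cdot> 1\<close> by orthogonality.\<close>

lemma card_irr_chars_subset_le:
  assumes F: "finite F" "F \<subseteq> irr_chars G"
  shows "card F \<le> card (carrier G)"
proof -
  define N where "N = card (carrier G)"
  define k where "k = card F"
  have "N > 0" using finite_carrier by (auto simp: N_def card_gt_0_iff)
  obtain f where f: "bij_betw f {0..<k} F" using ex_bij_betw_nat_finite[OF F(1)] by (auto simp: k_def)
  obtain en where en: "bij_betw en {0..<N} (carrier G)"
    using ex_bij_betw_nat_finite[OF finite_carrier] by (auto simp: N_def)
  have f_irr: "a < k \<Longrightarrow> f a \<in> irr_chars G" for a using f F(2) by (auto simp: bij_betw_def)
  have f_inj: "a < k \<Longrightarrow> a' < k \<Longrightarrow> f a = f a' \<longleftrightarrow> a = a'" for a a'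
    using f by (auto simp: bij_betw_def inj_on_def)
  define M where "M = mat k N (\<lambda>(a,b). f a (en b))"
  define M' where "M' = mat N k (\<lambda>(b,a). f a (inv (en b)))"
  have M: "M \<in> carrier_mat k N" and M': "M' \<in> carrier_mat N k" by (auto simp: M_def M'_def)
  have MM': "M * M' = of_nat N \<cdot>\<^sub>m 1\<^sub>m k"
  proof (rule eq_matI)
    fix a a' assume "a < dim_row (of_nat N \<cdot>\<^sub>m 1\<^sub>m k :: complex mat)" "a' < dim_col (of_nat N \<cdot>\<^sub>m 1\<^sub>m k :: complex mat)"
    hence aa: "a < k" "a' < k" by auto
    have "(M * M') $$ (a,a') = (\<Sum>b<N. f a (en b) * f a' (inv (en b)))"
      using aa by (subst mult_mat_nth[OF M M']) (auto simp: M_def M'_def)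
    also have "\<dots> = (\<Sum>g\<in>carrier G. f a g * f a' (inv g))"
      using sum.reindex_bij_betw[OF en, of "\<lambda>g. f a g * f a' (inv g)"] by (simp add: atLeast0LessThan)
    also have "\<dots> = (of_nat N \<cdot>\<^sub>m 1\<^sub>m k) $$ (a,a')"
      using aa f_inj by (simp add: irr_chars_orth[OF f_irr f_irr] N_def)
    finally show "(M * M') $$ (a,a') = (of_nat N \<cdot>\<^sub>m 1\<^sub>m k) $$ (a,a')" .
  qed (auto simp: M_def M'_def)
  show ?thesis
    unfolding k_def N_def using mult_eq_smult_one_dim_le[OF M M' MM'] \<open>N > 0\<close> by (simp add: k_def N_def)
qed

lemma finite_irr_chars: "finite (irr_chars G)"
  using card_irr_chars_subset_le infinite_arbitrarily_large[of "irr_chars G" "Suc (card (carrier G))"]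
  by fastforce

section \<open>The regular character\<close>

lemma regular_rep_exists:
  obtains L where "is_rep G (card (carrier G)) L"
    "\<And>x. x \<in> carrier G \<Longrightarrow> character G L x = (if x = \<one> then of_nat (card (carrier G)) else 0)"
proof -
  define N where "N = card (carrier G)"
  obtain en where en: "bij_betw en {0..<N} (carrier G)"
    using ex_bij_betw_nat_finite[OF finite_carrier] by (auto simp: N_def)
  have en_carrier: "i < N \<Longrightarrow> en i \<in> carrier G" for i using en by (auto simp: bij_betw_def)
  have en_inj: "i < N \<Longrightarrow> j < N \<Longrightarrow> en i = en j \<longleftrightarrow> i = j" for i j
    using en by (auto simp: bij_betw_def inj_on_def)
  have sum_en: "(\<Sum>k<N. F (en k)) = (\<Sum>y\<in>carrier G. F y)" for F :: "'a \<Rightarrow> complex"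
    using sum.reindex_bij_betw[OF en, of F] by (simp add: atLeast0LessThan)
  define L where "L g = mat N N (\<lambda>(i,j). if en i = g \<otimes> en j then 1 else 0 :: complex)" for g
  have L: "L g \<in> carrier_mat N N" for g by (simp add: L_def)
  have "L (g \<otimes> h) = L g * L h" if g: "g \<in> carrier G" and h: "h \<in> carrier G" for g h
  proof (rule eq_matI)
    fix i j assume "i < dim_row (L g * L h)" "j < dim_col (L g * L h)"
    hence ij: "i < N" "j < N" by (auto simp: L_def)
    let ?F = "\<lambda>y. if y = h \<otimes> en j then if en i = g \<otimes> y then 1 else 0 else 0 :: complex"
    have "(L g * L h) $$ (i,j) = (\<Sum>k<N. ?F (en k))"
      using ij by (subst mult_mat_nth[OF L L]) (auto simp: L_def intro!: sum.cong)
    also have "\<dots> = (\<Sum>y\<in>carrier G. ?F y)" by (rule sum_en)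
    also have "\<dots> = (if en i = g \<otimes> (h \<otimes> en j) then 1 else 0)"
      using h en_carrier[OF ij(2)] by (simp add: sum.delta[OF finite_carrier])
    also have "\<dots> = L (g \<otimes> h) $$ (i,j)" using ij g h en_carrier by (simp add: L_def m_assoc)
    finally show "L (g \<otimes> h) $$ (i,j) = (L g * L h) $$ (i,j)" by simp
  qed (auto simp: L_def)
  moreover have "L \<one> = 1\<^sub>m N" by (rule eq_matI) (auto simp: L_def en_carrier en_inj)
  ultimately have "is_rep G N L" using L by (simp add: is_rep_def)
  moreover have "character G L x = (if x = \<one> then of_nat N else 0)" if x: "x \<in> carrier G" for x
  proof -
    let ?F = "\<lambda>y. if y = x \<otimes> y then 1 else 0 :: complex"
    have "character G L x = (\<Sum>k<N. ?F (en k))"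
      using x by (simp add: character_def mat_trace_def L_def)
    also have "\<dots> = (\<Sum>y\<in>carrier G. ?F y)" by (rule sum_en)
    also have "\<dots> = (\<Sum>y\<in>carrier G. if x = \<one> then 1 else 0)"
      using x by (intro sum.cong) auto
    finally show ?thesis by (simp add: N_def)
  qed
  ultimately show ?thesis using that by (simp add: N_def)
qed

lemma coeff_eq_character_orth:
  assumes coeffs: "\<And>x. x \<in> carrier G \<Longrightarrow> \<chi> x = (\<Sum>\<psi>\<in>irr_chars G. c \<psi> * \<psi> x)"
    and \<phi>: "\<phi> \<in> irr_chars G"
  shows "(\<Sum>x\<in>carrier G. \<chi> x * \<phi> (inv x)) = c \<phi> * of_nat (card (carrier G))"
proof -
  have "(\<Sum>x\<in>carrier G. \<chi> x * \<phi> (inv x)) = (\<Sum>x\<in>carrier G. \<Sum>\<psi>\<in>irr_chars G. c \<psi> * (\<psi> x * \<phi> (inv x)))"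
    by (intro sum.cong refl) (simp add: coeffs sum_distrib_left sum_distrib_right ac_simps)
  also have "\<dots> = (\<Sum>\<psi>\<in>irr_chars G. c \<psi> * (\<Sum>x\<in>carrier G. \<psi> x * \<phi> (inv x)))"
    by (subst sum.swap) (simp add: sum_distrib_left)
  also have "\<dots> = (\<Sum>\<psi>\<in>irr_chars G. if \<psi> = \<phi> then c \<psi> * of_nat (card (carrier G)) else 0)"
    by (intro sum.cong refl) (simp add: irr_chars_orth[OF \<phi>])
  also have "\<dots> = c \<phi> * of_nat (card (carrier G))" using \<phi> finite_irr_chars by (simp add: sum.delta')
  finally show ?thesis .
qed

theorem sum_irr_chars_degree_mult:
  assumes g: "g \<in> carrier G"
  shows "(\<Sum>\<psi>\<in>irr_chars G. \<psi> \<one> * \<psi> g) = (if g = \<one> then of_nat (card (carrier G)) else 0)"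
proof -
  let ?N = "of_nat (card (carrier G)) :: complex"
  obtain L where L: "is_rep G (card (carrier G)) L"
    and char_L: "\<And>x. x \<in> carrier G \<Longrightarrow> character G L x = (if x = \<one> then ?N else 0)"
    using regular_rep_exists by blast
  obtain c where c: "\<forall>x\<in>carrier G. character G L x = (\<Sum>\<psi>\<in>irr_chars G. c \<psi> * \<psi> x)"
    using character_sum_irr_chars[OF finite_irr_chars L] by blast
  have "c \<phi> = \<phi> \<one>" if \<phi>: "\<phi> \<in> irr_chars G" for \<phi>
  proof -
    have "c \<phi> * ?N = (\<Sum>x\<in>carrier G. character G L x * \<phi> (inv x))"
      using coeff_eq_character_orth[OF _ \<phi>] c by simp
    also have "\<dots> = (\<Sum>x\<in>carrier G. if x = \<one> then ?N * \<phi> \<one> else 0)"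
      by (intro sum.cong refl) (simp add: char_L)
    also have "\<dots> = ?N * \<phi> \<one>" by (simp add: sum.delta[OF finite_carrier])
    finally show ?thesis using finite_carrier by (auto simp: card_gt_0_iff)
  qed
  then have "(\<Sum>\<psi>\<in>irr_chars G. \<psi> \<one> * \<psi> g) = character G L g"
    using c g by simp
  then show ?thesis using char_L[OF g] by simp
qed

section \<open>Frobenius' commutator formula\<close>

lemma irr_char_commutator_sum:
  assumes \<psi>: "\<psi> \<in> irr_chars G" and h: "h \<in> carrier G"
  shows "(\<Sum>y\<in>carrier G. \<Sum>x\<in>carrier G. \<psi> (x \<otimes> y \<otimes> inv x \<otimes> (inv y \<otimes> h))) =
    (of_nat (card (carrier G)) / \<psi> \<one>)\<^sup>2 * \<psi> h"
proof -
  obtain d \<rho> where irr: "is_irred_rep G d \<rho>" and \<psi>_eq: "\<psi> = character G \<rho>" and "\<psi> \<one> = of_nat d"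
    using irr_chars_memE[OF \<psi>] by metis
  let ?c = "of_nat (card (carrier G)) / of_nat d :: complex"
  have "(\<Sum>y\<in>carrier G. \<Sum>x\<in>carrier G. \<psi> (x \<otimes> y \<otimes> inv x \<otimes> (inv y \<otimes> h))) =
      (\<Sum>y\<in>carrier G. ?c * (\<psi> y * \<psi> (inv y \<otimes> h)))"
    using h by (intro sum.cong refl) (simp add: \<psi>_eq irr_character_conj_sum[OF irr])
  also have "\<dots> = ?c * (\<Sum>y\<in>carrier G. \<psi> y * \<psi> (inv y \<otimes> h))"
    by (simp add: sum_distrib_left)
  also have "\<dots> = ?c * (?c * \<psi> h)"
    by (simp add: \<psi>_eq irr_character_convolution[OF irr h])
  finally show ?thesis using \<open>\<psi> \<one> = of_nat d\<close> by (simp add: power2_eq_square)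
qed

theorem frobenius_commutator_count:
  assumes h: "h \<in> carrier G"
  shows "(\<Sum>\<psi>\<in>irr_chars G. \<psi> h / \<psi> \<one>) =
    of_nat (card {(x, y) \<in> carrier G \<times> carrier G. x \<otimes> y \<otimes> inv x \<otimes> inv y = inv h}) /
    of_nat (card (carrier G))"
proof -
  let ?N = "of_nat (card (carrier G)) :: complex"
  let ?C = "{(x, y) \<in> carrier G \<times> carrier G. x \<otimes> y \<otimes> inv x \<otimes> inv y = inv h}"
  define cm where "cm x y = x \<otimes> y \<otimes> inv x \<otimes> (inv y \<otimes> h)" for x y
  have cm: "cm x y \<in> carrier G" if "x \<in> carrier G" "y \<in> carrier G" for x y
    using that h by (simp add: cm_def)
  have cm_one: "cm x y = \<one> \<longleftrightarrow> x \<otimes> y \<otimes> inv x \<otimes> inv y = inv h"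
    if "x \<in> carrier G" "y \<in> carrier G" for x y
  proof -
    have "cm x y = (x \<otimes> y \<otimes> inv x \<otimes> inv y) \<otimes> h" using that h by (simp add: cm_def m_assoc)
    then show ?thesis using that h by (auto intro: inv_equality[symmetric])
  qed
  have "\<psi> \<one> \<noteq> 0" if "\<psi> \<in> irr_chars G" for \<psi>
    using irr_chars_memE[OF that] by (metis of_nat_eq_0_iff not_gr_zero)
  then have "?N\<^sup>2 * (\<Sum>\<psi>\<in>irr_chars G. \<psi> h / \<psi> \<one>) =
      (\<Sum>\<psi>\<in>irr_chars G. \<psi> \<one> * (\<Sum>y\<in>carrier G. \<Sum>x\<in>carrier G. \<psi> (cm x y)))"
    by (simp add: sum_distrib_left cm_def irr_char_commutator_sum h power2_eq_square field_simps
        cong: sum.cong)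
  also have "\<dots> = (\<Sum>y\<in>carrier G. \<Sum>x\<in>carrier G. \<Sum>\<psi>\<in>irr_chars G. \<psi> \<one> * \<psi> (cm x y))"
    by (simp add: sum_distrib_left sum.swap[of _ "irr_chars G"])
  also have "\<dots> = (\<Sum>y\<in>carrier G. \<Sum>x\<in>carrier G. if cm x y = \<one> then ?N else 0)"
    by (intro sum.cong refl) (simp add: sum_irr_chars_degree_mult cm)
  also have "\<dots> = (\<Sum>(x, y)\<in>carrier G \<times> carrier G. if x \<otimes> y \<otimes> inv x \<otimes> inv y = inv h then ?N else 0)"
    by (subst sum.swap) (simp add: sum.cartesian_product cm_one cong: sum.cong)
  also have "\<dots> = (\<Sum>p\<in>carrier G \<times> carrier G. if p \<in> ?C then ?N else 0)"
    by (intro sum.cong refl) (auto split: if_splits)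
  also have "\<dots> = (\<Sum>p\<in>carrier G \<times> carrier G \<inter> ?C. ?N)"
    by (rule sum.inter_restrict[symmetric]) (simp add: finite_carrier)
  also have "carrier G \<times> carrier G \<inter> ?C = ?C" by auto
  also have "(\<Sum>p\<in>?C. ?N) = of_nat (card ?C) * ?N" by simp
  finally have "?N * (?N * (\<Sum>\<psi>\<in>irr_chars G. \<psi> h / \<psi> \<one>)) = ?N * of_nat (card ?C)"
    by (simp add: power2_eq_square ac_simps)
  moreover have "?N \<noteq> 0" using finite_carrier by (auto simp: card_eq_0_iff)
  ultimately show ?thesis by (simp add: field_simps)
qed

section \<open>The linear program\<close>

lemma Re_sum_irr_char_ratio_nonneg: "h \<in> carrier G \<Longrightarrow> Re (\<Sum>\<psi>\<in>irr_chars G. \<psi> h / \<psi> \<one>) \<ge> 0"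
  by (simp add: frobenius_commutator_count)

lemma irr_char_one_eq_chdeg: "\<psi> \<in> irr_chars G \<Longrightarrow> \<psi> \<one> = complex_of_real (chdeg G \<psi>)"
  by (elim irr_chars_memE) (simp add: chdeg_def)

lemma chdeg_pos: "\<psi> \<in> irr_chars G \<Longrightarrow> chdeg G \<psi> > 0"
  by (elim irr_chars_memE) (simp add: chdeg_def)

lemma chdeg_trivial_character: "chdeg G (character G trivial_rep) = 1"
  by (simp add: chdeg_def character_trivial_rep)

lemma sum_carrier_sum_irr_chars_Re:
  "(\<Sum>g\<in>carrier G. \<Sum>\<psi>\<in>irr_chars G. \<beta> \<psi> * Re (\<psi> g)) = \<beta> (character G trivial_rep) * real (card (carrier G))"
proof -
  have "(\<Sum>g\<in>carrier G. \<Sum>\<psi>\<in>irr_chars G. \<beta> \<psi> * Re (\<psi> g)) =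
      (\<Sum>\<psi>\<in>irr_chars G. \<beta> \<psi> * Re (\<Sum>g\<in>carrier G. \<psi> g))"
    by (simp add: sum.swap[of _ "carrier G"] sum_distrib_left Re_sum)
  also have "\<dots> = (\<Sum>\<psi>\<in>irr_chars G. if \<psi> = character G trivial_rep then \<beta> \<psi> * real (card (carrier G)) else 0)"
    by (intro sum.cong refl) (simp add: sum_irr_char)
  also have "\<dots> = \<beta> (character G trivial_rep) * real (card (carrier G))"
    using finite_irr_chars trivial_character_in_irr_chars by (simp add: sum.delta')
  finally show ?thesis .
qed

lemma sum_irr_chars_chdeg_mult_Re:
  assumes "g \<in> carrier G"
  shows "(\<Sum>\<psi>\<in>irr_chars G. chdeg G \<psi> * Re (\<psi> g)) = (if g = \<one> then real (card (carrier G)) else 0)"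
proof -
  have "(\<Sum>\<psi>\<in>irr_chars G. chdeg G \<psi> * Re (\<psi> g)) = Re (\<Sum>\<psi>\<in>irr_chars G. \<psi> \<one> * \<psi> g)"
    by (simp add: Re_sum irr_char_one_eq_chdeg cong: sum.cong)
  then show ?thesis by (simp add: sum_irr_chars_degree_mult[OF assms])
qed

lemma feasible_chdeg: "feasible G (chdeg G)"
  unfolding feasible_def
proof (intro conjI ballI)
  show "(\<Sum>\<psi>\<in>irr_chars G. chdeg G \<psi> * chdeg G \<psi>) = real (card (carrier G))"
    using sum_irr_chars_chdeg_mult_Re[OF one_closed] by (simp add: chdeg_def)
  show "0 \<le> chdeg G \<psi>" if "\<psi> \<in> irr_chars G" for \<psi>
    using chdeg_pos[OF that] by simp
  show "0 \<le> (\<Sum>\<psi>\<in>irr_chars G. chdeg G \<psi> * Re (\<psi> g))" if "g \<in> carrier G" for g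
    using sum_irr_chars_chdeg_mult_Re[OF that] by simp
qed

lemma objective_chdeg: "objective G (chdeg G) = real (card (carrier G))"
proof -
  have ratio: "(\<Sum>\<psi>\<in>irr_chars G. chdeg G \<psi> / (chdeg G \<psi>)\<^sup>2 * Re (\<psi> g)) =
      Re (\<Sum>\<psi>\<in>irr_chars G. \<psi> g / \<psi> \<one>)" for g
    unfolding Re_sum
    by (intro sum.cong refl) (simp add: irr_char_one_eq_chdeg Re_divide_of_real power2_eq_square)
  then have "objective G (chdeg G) = (\<Sum>g\<in>carrier G. \<bar>Re (\<Sum>\<psi>\<in>irr_chars G. \<psi> g / \<psi> \<one>)\<bar>)"
    unfolding objective_def L1_norm_def by (simp only: Re_complex_of_real)
  also have "\<dots> = (\<Sum>g\<in>carrier G. Re (\<Sum>\<psi>\<in>irr_chars G. \<psi> g / \<psi> \<one>))"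
    by (intro sum.cong refl abs_of_nonneg Re_sum_irr_char_ratio_nonneg)
  also have "\<dots> = (\<Sum>g\<in>carrier G. \<Sum>\<psi>\<in>irr_chars G. chdeg G \<psi> / (chdeg G \<psi>)\<^sup>2 * Re (\<psi> g))"
    by (simp only: ratio)
  also have "\<dots> = chdeg G (character G trivial_rep) / (chdeg G (character G trivial_rep))\<^sup>2 *
      real (card (carrier G))"
    by (rule sum_carrier_sum_irr_chars_Re)
  also have "\<dots> = real (card (carrier G))" by (simp add: chdeg_trivial_character)
  finally show ?thesis .
qed

lemma card_le_objective:
  assumes "feasible G \<alpha>"
  shows "real (card (carrier G)) \<le> objective G \<alpha>"
proof -
  have norm: "(\<Sum>\<psi>\<in>irr_chars G. \<alpha> \<psi> * chdeg G \<psi>) = real (card (carrier G))"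
    and pos: "\<And>g. g \<in> carrier G \<Longrightarrow> (\<Sum>\<psi>\<in>irr_chars G. \<alpha> \<psi> * Re (\<psi> g)) \<ge> 0"
    using assms by (auto simp: feasible_def)
  have "real (card (carrier G)) = (\<Sum>\<psi>\<in>irr_chars G. \<alpha> \<psi> * Re (\<psi> \<one>))"
    using norm by (simp add: chdeg_def)
  also have "\<dots> \<le> (\<Sum>g\<in>carrier G. \<Sum>\<psi>\<in>irr_chars G. \<alpha> \<psi> * Re (\<psi> g))"
    using pos finite_carrier by (intro member_le_sum[of \<one>]) auto
  also have "\<dots> = \<alpha> (character G trivial_rep) / (chdeg G (character G trivial_rep))\<^sup>2 * real (card (carrier G))"
    by (simp add: sum_carrier_sum_irr_chars_Re chdeg_trivial_character)
  also have "\<dots> = (\<Sum>g\<in>carrier G. \<Sum>\<psi>\<in>irr_chars G. \<alpha> \<psi> / (chdeg G \<psi>)\<^sup>2 * Re (\<psi> g))"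
    by (rule sum_carrier_sum_irr_chars_Re[symmetric])
  also have "\<dots> \<le> objective G \<alpha>"
    unfolding objective_def L1_norm_def by (intro sum_mono) simp
  finally show ?thesis .
qed

end

theorem corollary2:
  fixes G :: "('a, 'b) monoid_scheme"
  assumes "group G" and "finite (carrier G)"
  shows "feasible G (chdeg G) \<and>
         (\<forall>\<alpha>. feasible G \<alpha> \<longrightarrow> objective G (chdeg G) \<le> objective G \<alpha>)"
proof -
  interpret finite_group G by (rule finite_group.intro[OF assms(1)]) (unfold_locales, rule assms(2))
  show ?thesis using feasible_chdeg objective_chdeg card_le_objective by simp
qed

end
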